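(* Let $\alpha\in(0,\pi/2)$ with $\alpha\ne\pi/4$. The system $\{v_{nk}^0\}_{n\in\mathbb N,\,k=1,\dots,4}$ defined by $$v_{n1}^0(t)=\begin{bmatrix}-\tfrac12\tan2\alpha\,\cos(n-1+\tfrac\alpha\pi)t\\ \sin(n-1+\tfrac\alpha\pi)t\end{bmatrix},\quad v_{n2}^0(t)=\begin{bmatrix}\tfrac12\tan2\alpha\,\cos(n-\tfrac\alpha\pi)t\\ \sin(n-\tfrac\alpha\pi)t\end{bmatrix},$$ $$v_{n3}^0(t)=\begin{bmatrix}0\\ \sin(n-\tfrac12)t\end{bmatrix},\quad v_{n4}^0(t)=\begin{bmatrix}0\\ \sin nt\end{bmatrix},\qquad n\in\mathbb N,$$ is a Riesz basis in the real Hilbert space $\mathcal H=L_2(0,2\pi)\oplus L_2(0,2\pi)$.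
   Context: In the paper $\alpha=\arccos\sqrt{p/m}$ with integers $2\le p\le m-2$, $2p\ne m$, which gives $\alpha\in(0,\pi/2)\setminus\{\pi/4\}$. $\mathcal H$ has inner product $(g,h)_{\mathcal H}=\int_0^{2\pi}(g_1h_1+g_2h_2)\,dt$. *)

theory Defs
  imports "HOL-Analysis.Analysis"
begin

definition sq_int :: "(real \<Rightarrow> real) \<Rightarrow> bool" where
  "sq_int f \<longleftrightarrow> set_borel_measurable lebesgue {0..2*pi} f \<and>
     set_integrable lebesgue {0..2*pi} (\<lambda>t. (f t)\<^sup>2)"

definition inH :: "(real \<Rightarrow> real \<times> real) \<Rightarrow> bool" where
  "inH f \<longleftrightarrow> sq_int (\<lambda>t. fst (f t)) \<and> sq_int (\<lambda>t. snd (f t))"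

definition Hnorm2 :: "(real \<Rightarrow> real \<times> real) \<Rightarrow> real" where
  "Hnorm2 f = (LINT t:{0..2*pi}|lebesgue. (fst (f t))\<^sup>2 + (snd (f t))\<^sup>2)"

definition riesz_basis_H :: "'i set \<Rightarrow> ('i \<Rightarrow> real \<Rightarrow> real \<times> real) \<Rightarrow> bool" where
  "riesz_basis_H I e \<longleftrightarrow>
     (\<forall>i\<in>I. inH (e i)) \<and>
     (\<forall>h. inH h \<longrightarrow> (\<forall>\<epsilon>>0. \<exists>F c. finite F \<and> F \<subseteq> I \<and>
          Hnorm2 (\<lambda>t. h t - (\<Sum>i\<in>F. c i *\<^sub>R e i t)) < \<epsilon>)) \<and>
     (\<exists>A B. 0 < A \<and> 0 < B \<and>
        (\<forall>F c. finite F \<longrightarrow> F \<subseteq> I \<longrightarrow>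
           A * (\<Sum>i\<in>F. (c i)\<^sup>2) \<le> Hnorm2 (\<lambda>t. \<Sum>i\<in>F. c i *\<^sub>R e i t) \<and>
           Hnorm2 (\<lambda>t. \<Sum>i\<in>F. c i *\<^sub>R e i t) \<le> B * (\<Sum>i\<in>F. (c i)\<^sup>2)))"

definition v0 :: "real \<Rightarrow> nat \<times> nat \<Rightarrow> real \<Rightarrow> real \<times> real" where
  "v0 \<alpha> nk t = (let n = real (fst nk); k = snd nk in
     if k = 1 then (- (1/2) * tan (2*\<alpha>) * cos ((n - 1 + \<alpha>/pi) * t), sin ((n - 1 + \<alpha>/pi) * t))
     else if k = 2 then ((1/2) * tan (2*\<alpha>) * cos ((n - \<alpha>/pi) * t), sin ((n - \<alpha>/pi) * t))
     else if k = 3 then (0, sin ((n - 1/2) * t))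
     else (0, sin (n * t)))"

end

theory Submission
  imports Defs
begin

text \<open>A combination of the system splits into a first-component part (k = 1, 2), which up to
  signs is \<open>(- tan (2\<alpha>)/2 * U, V)\<close> for the real and imaginary parts \<open>U, V\<close> of an exponential sum
  \<open>\<Sum> z\<^sub>j exp (i \<nu>\<^sub>j t)\<close> with distinct frequencies \<open>\<nu>\<^sub>j \<in> \<alpha>/\<pi> + \<int>\<close>, and second-component sines
  \<open>W = \<Sum> c\<^sub>m sin (m t / 2)\<close>. Both families are orthogonal on \<open>(0, 2\<pi>)\<close>. Stability could only fail
  if \<open>V\<close> cancelled \<open>W\<close>; but \<open>t \<mapsto> 2\<pi> - t\<close> rotates \<open>(U, V)\<close> by the angle \<open>2\<alpha>\<close>, so \<open>U\<close>, which is
  alone in the first component, carries at least the fraction \<open>sin\<^sup>2 (2\<alpha>) / 6\<close> of the energy of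
  \<open>(U, V)\<close>.

  For completeness, a first component is approximated by \<open>cos (\<alpha>t/\<pi>) P t - sin (\<alpha>t/\<pi>) sin t R t\<close>
  with cosine polynomials \<open>P, R\<close>: the values at \<open>t\<close> and \<open>2\<pi> - t\<close> determine \<open>P\<close> and \<open>sin t R t\<close> on
  \<open>(0, \<pi>)\<close> because \<open>sin (2\<alpha>) \<noteq> 0\<close>, and \<open>P, R\<close> are even about \<open>\<pi>\<close>. The remaining second
  component is approximated by \<open>sin (t/2) R t\<close> with \<open>R\<close> a cosine polynomial in \<open>t/2\<close>. All these
  products expand into finite combinations of the system; the approximations themselves come
  from Stone-Weierstrass after dividing by weights that vanish only at the endpoints.\<close>

section \<open>Orthogonality of shifted trigonometric systems\<close>

lemma integral_cos_half_multiple: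
  fixes j :: int
  shows "integral {0..2*pi} (\<lambda>t. cos (real_of_int j / 2 * t)) = (if j = 0 then 2*pi else 0)"
proof (cases "j = 0")
  case False
  define w where "w = real_of_int j / 2"
  have "w \<noteq> 0" using False by (simp add: w_def)
  have "((\<lambda>t. cos (w * t)) has_integral (sin (w * (2*pi)) / w - sin (w * 0) / w)) {0..2*pi}"
  proof (rule fundamental_theorem_of_calculus)
    fix x assume "x \<in> {0..2*pi}"
    have "((\<lambda>t. sin (w * t) / w) has_real_derivative cos (w * x)) (at x)"
      using \<open>w \<noteq> 0\<close> by (auto intro!: derivative_eq_intros)
    then show "((\<lambda>t. sin (w * t) / w) has_vector_derivative cos (w * x)) (at x within {0..2*pi})"
      by (simp add: has_real_derivative_iff_has_vector_derivative has_vector_derivative_at_within)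
  qed simp
  moreover have "sin (w * (2*pi)) = 0"
    using sin_times_pi_eq_0[of "real_of_int j"] by (simp add: w_def)
  ultimately show ?thesis using False by (simp add: w_def integral_unique)
qed simp

lemma integral_cos_integer_multiple:
  assumes "d \<in> \<int>"
  shows "integral {0..2*pi} (\<lambda>t. cos (d * t)) = (if d = 0 then 2*pi else 0)"
proof -
  obtain j where "d = of_int j" using assms Ints_cases by blast
  then show ?thesis using integral_cos_half_multiple[of "2*j"] by simp
qed

lemma integrable_cos_interval: "(\<lambda>t. cos (d * t)) integrable_on {a..b::real}"
  by (intro integrable_continuous_interval continuous_intros)

lemma integral_double_sum_kronecker:
  fixes g :: "'i \<Rightarrow> 'i \<Rightarrow> real \<Rightarrow> real"
  assumes G: "finite G" and int: "\<And>i l. i \<in> G \<Longrightarrow> l \<in> G \<Longrightarrow> g i l integrable_on S"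
    and orth: "\<And>i l. i \<in> G \<Longrightarrow> l \<in> G \<Longrightarrow> integral S (g i l) = (if i = l then \<kappa> else 0)"
  shows "integral S (\<lambda>t. \<Sum>i\<in>G. \<Sum>l\<in>G. w i * w l * g i l t) = \<kappa> * (\<Sum>i\<in>G. (w i)\<^sup>2)"
proof -
  have int': "(\<lambda>t. w i * w l * g i l t) integrable_on S" if "i \<in> G" "l \<in> G" for i l
    using integrable_on_cmult_left[OF int[OF that], of "w i * w l"] by simp
  have "integral S (\<lambda>t. \<Sum>i\<in>G. \<Sum>l\<in>G. w i * w l * g i l t)
      = (\<Sum>i\<in>G. \<Sum>l\<in>G. integral S (\<lambda>t. w i * w l * g i l t))"
    using G int' by (simp add: integral_sum integrable_sum)
  also have "\<dots> = (\<Sum>i\<in>G. \<Sum>l\<in>G. if l = i then w i * w l * \<kappa> else 0)"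
    using int orth by (intro sum.cong refl) (auto simp: integral_mult)
  also have "\<dots> = \<kappa> * (\<Sum>i\<in>G. (w i)\<^sup>2)"
    using G by (simp add: sum_distrib_left power2_eq_square mult_ac)
  finally show ?thesis .
qed

lemma integral_cos_sin_sums_square:
  fixes \<nu> z :: "'i \<Rightarrow> real"
  assumes G: "finite G" and inj: "inj_on \<nu> G" and int: "\<And>i l. i \<in> G \<Longrightarrow> l \<in> G \<Longrightarrow> \<nu> i - \<nu> l \<in> \<int>"
  shows "integral {0..2*pi} (\<lambda>t. (\<Sum>i\<in>G. z i * cos (\<nu> i * t))\<^sup>2 + (\<Sum>i\<in>G. z i * sin (\<nu> i * t))\<^sup>2)
         = 2*pi * (\<Sum>i\<in>G. (z i)\<^sup>2)"
proof -
  have "(\<Sum>i\<in>G. z i * cos (\<nu> i * t))\<^sup>2 + (\<Sum>i\<in>G. z i * sin (\<nu> i * t))\<^sup>2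
      = (\<Sum>i\<in>G. \<Sum>l\<in>G. z i * z l * cos ((\<nu> i - \<nu> l) * t))" for t
    by (simp add: power2_eq_square sum_product sum.distrib[symmetric] left_diff_distrib cos_diff
        algebra_simps)
  moreover have "integral {0..2*pi} (\<lambda>t. cos ((\<nu> i - \<nu> l) * t)) = (if i = l then 2*pi else 0)"
    if "i \<in> G" "l \<in> G" for i l
    using integral_cos_integer_multiple[OF int[OF that]] inj that by (auto dest: inj_onD)
  ultimately show ?thesis
    by (simp add: integral_double_sum_kronecker[OF G integrable_cos_interval])
qed

lemma integral_sin_half_sum_square:
  fixes w :: "'i \<Rightarrow> real" and m :: "'i \<Rightarrow> nat"
  assumes G: "finite G" and inj: "inj_on m G" and pos: "\<And>i. i \<in> G \<Longrightarrow> m i > 0"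
  shows "integral {0..2*pi} (\<lambda>t. (\<Sum>i\<in>G. w i * sin (real (m i) / 2 * t))\<^sup>2) = pi * (\<Sum>i\<in>G. (w i)\<^sup>2)"
proof -
  define g where "g i l t = (cos (real_of_int (int (m i) - int (m l)) / 2 * t)
      - cos (real_of_int (int (m i) + int (m l)) / 2 * t)) / 2" for i l t
  have "(\<Sum>i\<in>G. w i * sin (real (m i) / 2 * t))\<^sup>2 = (\<Sum>i\<in>G. \<Sum>l\<in>G. w i * w l * g i l t)" for t
  proof -
    have "sin (real (m i) / 2 * t) * sin (real (m l) / 2 * t) = g i l t" for i l
      unfolding sin_times_sin g_def by (simp add: field_simps)
    then show ?thesis
      by (simp add: power2_eq_square sum_product algebra_simps)
  qed
  moreover have "g i l integrable_on {0..2*pi}" for i l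
    unfolding g_def by (intro integrable_continuous_interval continuous_intros) auto
  moreover have "integral {0..2*pi} (g i l) = (if i = l then pi else 0)" if "i \<in> G" "l \<in> G" for i l
  proof -
    have "(int (m i) - int (m l) = 0) = (i = l)" using inj that by (auto dest: inj_onD)
    moreover have "int (m i) + int (m l) \<noteq> 0" using pos[OF that(1)] by simp
    moreover have "(g i l has_integral
        (integral {0..2*pi} (\<lambda>t. cos (real_of_int (int (m i) - int (m l)) / 2 * t))
       - integral {0..2*pi} (\<lambda>t. cos (real_of_int (int (m i) + int (m l)) / 2 * t))) / 2) {0..2*pi}"
      unfolding g_def
      by (intro has_integral_divide has_integral_diff integrable_integral integrable_cos_interval)
    ultimately show ?thesis
      by (simp only: integral_cos_half_multiple integral_unique) simp
  qed
  ultimately show ?thesis by (simp add: integral_double_sum_kronecker[OF G])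
qed

lemma integral_reflect_shift_real:
  fixes g :: "real \<Rightarrow> real"
  shows "integral {a..b} (\<lambda>t. g (c - t)) = integral {c - b..c - a} g"
proof -
  have "integral {a..b} (\<lambda>t. g (c - t)) = integral {-b..-a} (\<lambda>x. g (c + x))"
    using Henstock_Kurzweil_Integration.integral_reflect_real[where f="\<lambda>t. g (c - t)" and a=a and b=b] by simp
  also have "\<dots> = integral {c - b..c - a} g"
    using integral_shift_Icc_real[where a="-b" and b="-a" and c=c and f=g] by (simp add: o_def algebra_simps)
  finally show ?thesis .
qed

lemma rotation_square_ge:
  fixes C S u w :: real
  assumes "C\<^sup>2 + S\<^sup>2 = 1"
  shows "S\<^sup>2 / 3 * (u\<^sup>2 + w\<^sup>2) \<le> u\<^sup>2 + (C * u + S * w)\<^sup>2"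
proof -
  have "C\<^sup>2 \<le> 1" "S\<^sup>2 \<le> 1" using assms by (smt (verit) zero_le_power2)+
  then have "(C * u)\<^sup>2 \<le> u\<^sup>2" "(S * u)\<^sup>2 \<le> u\<^sup>2"
    by (simp_all add: power_mult_distrib mult_left_le_one_le)
  moreover have "(S * w)\<^sup>2 \<le> 2 * (C * u + S * w)\<^sup>2 + 2 * (C * u)\<^sup>2"
    using sum_squares_ge_zero[of "C * u + S * w + C * u" 0] by (simp add: power2_eq_square algebra_simps)
  moreover have "S\<^sup>2 * (u\<^sup>2 + w\<^sup>2) = (S * u)\<^sup>2 + (S * w)\<^sup>2"
    by (simp add: power_mult_distrib algebra_simps)
  ultimately show ?thesis using zero_le_power2[of "C * u + S * w"] by linarith
qed

lemma cos_sum_reflect: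
  assumes "\<And>i. i \<in> G \<Longrightarrow> \<nu> i - a \<in> \<int>"
  shows "(\<Sum>i\<in>G. z i * cos (\<nu> i * (2*pi - t)))
       = cos (2*pi*a) * (\<Sum>i\<in>G. z i * cos (\<nu> i * t)) + sin (2*pi*a) * (\<Sum>i\<in>G. z i * sin (\<nu> i * t))"
proof -
  have "cos (\<nu> i * (2*pi - t)) = cos (2*pi*a) * cos (\<nu> i * t) + sin (2*pi*a) * sin (\<nu> i * t)"
    if i: "i \<in> G" for i
  proof -
    obtain j where j: "\<nu> i = a + of_int j"
      using assms[OF i] by (metis Ints_cases add.commute diff_add_cancel)
    have "\<nu> i * (2*pi - t) = 2*pi*a + 2 * pi * of_int j - \<nu> i * t"
      using j by (simp add: algebra_simps)
    then show ?thesis by (simp add: cos_diff cos_add sin_add cos_int_2pin sin_int_2pin)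
  qed
  then show ?thesis by (simp add: sum_distrib_left sum.distrib[symmetric] algebra_simps)
qed

text \<open>The reflection \<open>t \<mapsto> 2\<pi> - t\<close> rotates the pair (cosine sum, sine sum) by the angle \<open>2\<pi>a\<close>,
  so averaging the square of the cosine sum with that of its reflection captures a fixed fraction
  of the total energy.\<close>
lemma integral_cos_sum_square_ge:
  fixes \<nu> z :: "'i \<Rightarrow> real"
  assumes G: "finite G" and inj: "inj_on \<nu> G" and freq: "\<And>i. i \<in> G \<Longrightarrow> \<nu> i - a \<in> \<int>"
  shows "pi * (sin (2*pi*a))\<^sup>2 / 3 * (\<Sum>i\<in>G. (z i)\<^sup>2) \<le> integral {0..2*pi} (\<lambda>t. (\<Sum>i\<in>G. z i * cos (\<nu> i * t))\<^sup>2)"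
proof -
  define C where "C = cos (2*pi*a)"
  define S where "S = sin (2*pi*a)"
  define U where "U t = (\<Sum>i\<in>G. z i * cos (\<nu> i * t))" for t
  define V where "V t = (\<Sum>i\<in>G. z i * sin (\<nu> i * t))" for t
  have cont: "continuous_on {0..2*pi} U" "continuous_on {0..2*pi} V"
    unfolding U_def V_def by (intro continuous_intros)+
  have int: "(\<lambda>t. (U t)\<^sup>2) integrable_on {0..2*pi}" "(\<lambda>t. (V t)\<^sup>2) integrable_on {0..2*pi}"
    "(\<lambda>t. (C * U t + S * V t)\<^sup>2) integrable_on {0..2*pi}"
    "(\<lambda>t. S\<^sup>2 / 3 * ((U t)\<^sup>2 + (V t)\<^sup>2)) integrable_on {0..2*pi}"
    by (intro integrable_continuous_interval continuous_intros cont)+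
  have int_diff: "\<nu> i - \<nu> l \<in> \<int>" if "i \<in> G" "l \<in> G" for i l
    using Ints_diff[OF freq[OF that(1)] freq[OF that(2)]] by simp
  have "integral {0..2*pi} (\<lambda>t. (U t)\<^sup>2) = integral {0..2*pi} (\<lambda>t. (U (2*pi - t))\<^sup>2)"
    using integral_reflect_shift_real[of 0 "2*pi" "\<lambda>t. (U t)\<^sup>2" "2*pi"] by simp
  also have "\<dots> = integral {0..2*pi} (\<lambda>t. (C * U t + S * V t)\<^sup>2)"
    by (simp only: U_def V_def C_def S_def cos_sum_reflect[OF freq])
  finally have "2 * integral {0..2*pi} (\<lambda>t. (U t)\<^sup>2)
      = integral {0..2*pi} (\<lambda>t. (U t)\<^sup>2 + (C * U t + S * V t)\<^sup>2)"
    using int by (simp add: integral_add)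
  also have "\<dots> \<ge> integral {0..2*pi} (\<lambda>t. S\<^sup>2 / 3 * ((U t)\<^sup>2 + (V t)\<^sup>2))"
    using int by (intro integral_le rotation_square_ge integrable_add) (simp_all add: C_def S_def)
  also have "integral {0..2*pi} (\<lambda>t. S\<^sup>2 / 3 * ((U t)\<^sup>2 + (V t)\<^sup>2))
      = S\<^sup>2 / 3 * (2*pi * (\<Sum>i\<in>G. (z i)\<^sup>2))"
    unfolding integral_mult_right U_def V_def by (simp only: integral_cos_sin_sums_square[OF G inj int_diff])
  finally show ?thesis by (simp add: U_def S_def mult_ac)
qed

section \<open>Square-integrable functions on an interval\<close>

definition square_integrable :: "real set \<Rightarrow> (real \<Rightarrow> real) \<Rightarrow> bool" where
  "square_integrable S f \<longleftrightarrow> f \<in> borel_measurable (lebesgue_on S) \<and> (\<lambda>t. (f t)\<^sup>2) integrable_on S"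

lemma measurable_bounded_by_integrable_imp_integrable:
  fixes f g :: "real \<Rightarrow> real"
  assumes "f \<in> borel_measurable (lebesgue_on S)" "S \<in> sets lebesgue" "g integrable_on S"
    "\<And>x. x \<in> S \<Longrightarrow> \<bar>f x\<bar> \<le> g x"
  shows "f integrable_on S"
  using measurable_bounded_by_integrable_imp_absolutely_integrable[of f S g] assms
    set_lebesgue_integral_eq_integral(1) by auto

lemma square_integrable_continuous:
  "continuous_on {a..b} f \<Longrightarrow> square_integrable {a..b} f"
  unfolding square_integrable_def
  by (auto intro!: continuous_imp_measurable_on_sets_lebesgue integrable_continuous_interval
      continuous_intros)

lemma square_integrable_imp_integrable_mult:
  assumes S: "S \<in> sets lebesgue" and f: "square_integrable S f" and g: "square_integrable S g"
  shows "(\<lambda>t. f t * g t) integrable_on S"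
proof (rule measurable_bounded_by_integrable_imp_integrable[OF _ S])
  show "(\<lambda>t. f t * g t) \<in> borel_measurable (lebesgue_on S)"
    using f g by (intro borel_measurable_times) (simp_all add: square_integrable_def)
  show "(\<lambda>t. (f t)\<^sup>2 / 2 + (g t)\<^sup>2 / 2) integrable_on S"
    using f g by (intro integrable_add integrable_on_divide) (simp_all add: square_integrable_def)
  show "\<bar>f x * g x\<bar> \<le> (f x)\<^sup>2 / 2 + (g x)\<^sup>2 / 2" for x
    using sum_squares_ge_zero[of "\<bar>f x\<bar> - \<bar>g x\<bar>" 0]
    by (simp add: power2_eq_square algebra_simps abs_mult)
qed

lemma square_integrable_diff:
  assumes S: "S \<in> sets lebesgue" and f: "square_integrable S f" and g: "square_integrable S g"
  shows "square_integrable S (\<lambda>t. f t - g t)"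
proof -
  have "(\<lambda>t. (f t)\<^sup>2 - 2 * (f t * g t) + (g t)\<^sup>2) integrable_on S"
    using f g square_integrable_imp_integrable_mult[OF S f g]
    by (intro integrable_add integrable_diff integrable_on_cmult_left) (simp_all add: square_integrable_def)
  moreover have "(\<lambda>t. f t - g t) \<in> borel_measurable (lebesgue_on S)"
    using f g by (intro borel_measurable_diff) (simp_all add: square_integrable_def)
  ultimately show ?thesis
    by (simp add: square_integrable_def power2_diff algebra_simps)
qed

lemma integral_square_diff_triangle:
  assumes S: "S \<in> sets lebesgue"
    and f: "square_integrable S f" and g: "square_integrable S g" and h: "square_integrable S h"
  shows "integral S (\<lambda>t. (f t - h t)\<^sup>2)
       \<le> 2 * integral S (\<lambda>t. (f t - g t)\<^sup>2) + 2 * integral S (\<lambda>t. (g t - h t)\<^sup>2)"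
proof -
  have int: "(\<lambda>t. (f t - g t)\<^sup>2) integrable_on S" "(\<lambda>t. (g t - h t)\<^sup>2) integrable_on S"
    "(\<lambda>t. (f t - h t)\<^sup>2) integrable_on S"
    using square_integrable_diff[OF S] f g h by (simp_all add: square_integrable_def)
  have "integral S (\<lambda>t. (f t - h t)\<^sup>2) \<le> integral S (\<lambda>t. 2 * (f t - g t)\<^sup>2 + 2 * (g t - h t)\<^sup>2)"
  proof (rule integral_le)
    show "(f x - h x)\<^sup>2 \<le> 2 * (f x - g x)\<^sup>2 + 2 * (g x - h x)\<^sup>2" for x
      using sum_squares_ge_zero[of "f x - 2 * g x + h x" 0] by (simp add: power2_eq_square algebra_simps)
  qed (use int in \<open>auto intro: integrable_add integrable_on_cmult_left\<close>)
  then show ?thesis using int by (simp add: integral_add)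
qed

lemma sq_int_imp_square_integrable:
  assumes "sq_int f"
  shows "square_integrable {0..2*pi} f"
proof -
  have "(\<lambda>x. indicator {0..2*pi} x *\<^sub>R f x) = (\<lambda>x. if x \<in> {0..2*pi} then f x else 0)"
    by (rule ext) (simp only: indicator_scaleR_eq_if)
  then have "f \<in> borel_measurable (lebesgue_on {0..2*pi})"
    using assms unfolding sq_int_def set_borel_measurable_def by (intro borel_measurable_if_D) simp
  moreover have "(\<lambda>t. (f t)\<^sup>2) integrable_on {0..2*pi}"
    using assms unfolding sq_int_def by (intro set_lebesgue_integral_eq_integral(1)) simp
  ultimately show ?thesis by (simp add: square_integrable_def)
qed

lemma continuous_imp_sq_int:
  fixes f :: "real \<Rightarrow> real"
  assumes "continuous_on {0..2*pi} f"
  shows "sq_int f"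
proof -
  have "set_integrable lebesgue {0..2*pi} f" "set_integrable lebesgue {0..2*pi} (\<lambda>t. (f t)\<^sup>2)"
    using assms continuous_on_power[OF assms, of 2]
    by (simp_all add: absolutely_integrable_continuous_real)
  then show ?thesis
    unfolding sq_int_def set_integrable_def set_borel_measurable_def
    by (auto intro: borel_measurable_integrable)
qed

lemma Hnorm2_eq_integrals:
  assumes "square_integrable {0..2*pi} f" "square_integrable {0..2*pi} g"
  shows "Hnorm2 (\<lambda>t. (f t, g t)) = integral {0..2*pi} (\<lambda>t. (f t)\<^sup>2) + integral {0..2*pi} (\<lambda>t. (g t)\<^sup>2)"
proof -
  have int: "(\<lambda>t. (f t)\<^sup>2) integrable_on {0..2*pi}" "(\<lambda>t. (g t)\<^sup>2) integrable_on {0..2*pi}"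
    using assms by (simp_all add: square_integrable_def)
  then have "set_integrable lebesgue {0..2*pi} (\<lambda>t. (f t)\<^sup>2 + (g t)\<^sup>2)"
    by (intro nonnegative_absolutely_integrable_1 integrable_add) auto
  then show ?thesis
    using int by (simp add: Hnorm2_def set_lebesgue_integral_eq_integral(2) integral_add)
qed

section \<open>Riesz bounds\<close>

lemma integral_sum_square_bounds:
  fixes V W :: "real \<Rightarrow> real"
  assumes V: "continuous_on {a..b} V" and W: "continuous_on {a..b} W"
  shows "integral {a..b} (\<lambda>t. (W t)\<^sup>2) / 2 - integral {a..b} (\<lambda>t. (V t)\<^sup>2)
           \<le> integral {a..b} (\<lambda>t. (V t + W t)\<^sup>2)"
    and "integral {a..b} (\<lambda>t. (V t + W t)\<^sup>2)
           \<le> 2 * integral {a..b} (\<lambda>t. (V t)\<^sup>2) + 2 * integral {a..b} (\<lambda>t. (W t)\<^sup>2)"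
proof -
  have int: "(\<lambda>t. (V t)\<^sup>2) integrable_on {a..b}" "(\<lambda>t. (W t)\<^sup>2) integrable_on {a..b}"
    "(\<lambda>t. (V t + W t)\<^sup>2) integrable_on {a..b}"
    by (intro integrable_continuous_interval continuous_intros V W)+
  have "integral {a..b} (\<lambda>t. (W t)\<^sup>2 / 2 - (V t)\<^sup>2) \<le> integral {a..b} (\<lambda>t. (V t + W t)\<^sup>2)"
  proof (rule integral_le)
    show "(W t)\<^sup>2 / 2 - (V t)\<^sup>2 \<le> (V t + W t)\<^sup>2" for t
      using sum_squares_ge_zero[of "2 * V t + W t" 0] by (simp add: power2_eq_square algebra_simps)
  qed (use int in \<open>auto intro: integrable_diff integrable_on_divide\<close>)
  then show "integral {a..b} (\<lambda>t. (W t)\<^sup>2) / 2 - integral {a..b} (\<lambda>t. (V t)\<^sup>2)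
      \<le> integral {a..b} (\<lambda>t. (V t + W t)\<^sup>2)"
    using int by (simp add: integral_diff integrable_on_divide)
  have "integral {a..b} (\<lambda>t. (V t + W t)\<^sup>2) \<le> integral {a..b} (\<lambda>t. 2 * (V t)\<^sup>2 + 2 * (W t)\<^sup>2)"
  proof (rule integral_le)
    show "(V t + W t)\<^sup>2 \<le> 2 * (V t)\<^sup>2 + 2 * (W t)\<^sup>2" for t
      using sum_squares_ge_zero[of "V t - W t" 0] by (simp add: power2_eq_square algebra_simps)
  qed (use int in \<open>auto intro: integrable_add integrable_on_cmult_left\<close>)
  then show "integral {a..b} (\<lambda>t. (V t + W t)\<^sup>2)
      \<le> 2 * integral {a..b} (\<lambda>t. (V t)\<^sup>2) + 2 * integral {a..b} (\<lambda>t. (W t)\<^sup>2)"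
    using int by (simp add: integral_add)
qed

lemma sum_le_of_lower_bounds:
  fixes N P Q a b c :: real
  assumes "0 < a" "0 < b" "0 \<le> c" "a * P \<le> N" "b * Q - c * P \<le> N"
  shows "P + Q \<le> (1/a + (1 + c/a) / b) * N"
proof -
  have P: "P \<le> N / a" using assms by (simp add: field_simps)
  then have "c * P \<le> c * (N / a)" using assms(3) by (rule mult_left_mono)
  then have "b * Q \<le> N + c * (N / a)" using assms(5) by linarith
  then have "Q \<le> (N + c * (N / a)) / b" using assms(2) by (simp add: pos_le_divide_eq mult.commute)
  moreover have "(1/a + (1 + c/a) / b) * N = N / a + (N + c * (N / a)) / b"
    by (simp add: field_simps)
  ultimately show ?thesis using P by linarith
qed

lemma tan_double_nonzero:
  fixes \<alpha> :: real
  assumes "0 < \<alpha>" "\<alpha> < pi/2" "\<alpha> \<noteq> pi/4"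
  shows "tan (2*\<alpha>) \<noteq> 0"
proof -
  have "sin (2*\<alpha>) > 0" using assms by (intro sin_gt_zero) auto
  moreover have "cos (2*\<alpha>) \<noteq> 0"
  proof (cases "2*\<alpha> < pi/2")
    case True then show ?thesis using assms cos_gt_zero_pi[of "2*\<alpha>"] by auto
  next
    case False
    then have "cos (pi - 2*\<alpha>) > 0" using assms by (intro cos_gt_zero_pi) auto
    then show ?thesis by simp
  qed
  ultimately show ?thesis by (simp add: tan_def)
qed

text \<open>For \<open>k \<in> {1, 2}\<close> the vector \<open>v0 \<alpha> (n, k)\<close> is \<open>v0_sign (n, k)\<close> times
  \<open>(- tan (2\<alpha>) / 2 * cos (\<nu> t), sin (\<nu> t))\<close> with \<open>\<nu> = v0_freq (\<alpha>/\<pi>) (n, k) \<in> \<alpha>/\<pi> + \<int>\<close>;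
  for \<open>k \<in> {3, 4}\<close> it is \<open>(0, sin (m t / 2))\<close> with \<open>m = v0_half_freq (n, k)\<close>.\<close>
definition v0_freq :: "real \<Rightarrow> nat \<times> nat \<Rightarrow> real" where
  "v0_freq a i = (if snd i = 1 then a + real (fst i) - 1 else a - real (fst i))"

definition v0_sign :: "nat \<times> nat \<Rightarrow> real" where
  "v0_sign i = (if snd i = 1 then 1 else -1)"

definition v0_half_freq :: "nat \<times> nat \<Rightarrow> nat" where
  "v0_half_freq i = (if snd i = 3 then 2 * fst i - 1 else 2 * fst i)"

lemma v0_exponential_form:
  assumes "snd i = 1 \<or> snd i = 2"
  shows "c *\<^sub>R v0 \<alpha> i t = (- (tan (2*\<alpha>) / 2) * (v0_sign i * c * cos (v0_freq (\<alpha>/pi) i * t)),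
                           v0_sign i * c * sin (v0_freq (\<alpha>/pi) i * t))"
proof (cases "snd i = 1")
  case True
  then show ?thesis by (simp add: v0_def v0_freq_def v0_sign_def Let_def algebra_simps)
next
  case False
  have "(\<alpha>/pi - real (fst i)) * t = - ((real (fst i) - \<alpha>/pi) * t)" by (simp add: algebra_simps)
  then show ?thesis using False assms
    unfolding v0_def v0_freq_def v0_sign_def Let_def by (simp only: cos_minus sin_minus) simp
qed

lemma v0_half_sine_form:
  assumes "fst i \<ge> 1" "snd i = 3 \<or> snd i = 4"
  shows "v0 \<alpha> i t = (0, sin (real (v0_half_freq i) / 2 * t))"
  using assms by (auto simp: v0_def v0_half_freq_def Let_def of_nat_diff field_simps)

lemma v0_freq_minus_Ints: "v0_freq a i - a \<in> \<int>"
  by (simp add: v0_freq_def)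

lemma v0_freq_diff_Ints: "v0_freq a i - v0_freq a l \<in> \<int>"
  by (simp add: v0_freq_def)

lemma inj_on_v0_freq: "inj_on (v0_freq a) {i. fst i \<ge> 1 \<and> (snd i = 1 \<or> snd i = 2)}"
  by (rule inj_onI) (auto simp: v0_freq_def prod_eq_iff split: if_splits)

lemma inj_on_v0_half_freq: "inj_on v0_half_freq {i. fst i \<ge> 1 \<and> (snd i = 3 \<or> snd i = 4)}"
  by (rule inj_onI) (auto simp: v0_half_freq_def prod_eq_iff split: if_splits; presburger)

lemma v0_combination_eq:
  assumes F: "finite F" and FI: "F \<subseteq> {1..} \<times> {1..4}"
  shows "(\<Sum>i\<in>F. c i *\<^sub>R v0 \<alpha> i t) =
    (- (tan (2*\<alpha>) / 2) * (\<Sum>i\<in>{i\<in>F. snd i \<le> 2}. v0_sign i * c i * cos (v0_freq (\<alpha>/pi) i * t)),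
     (\<Sum>i\<in>{i\<in>F. snd i \<le> 2}. v0_sign i * c i * sin (v0_freq (\<alpha>/pi) i * t))
       + (\<Sum>i\<in>{i\<in>F. 2 < snd i}. c i * sin (real (v0_half_freq i) / 2 * t)))"
proof -
  have "(\<Sum>i\<in>F. c i *\<^sub>R v0 \<alpha> i t)
      = (\<Sum>i\<in>{i\<in>F. snd i \<le> 2}. c i *\<^sub>R v0 \<alpha> i t) + (\<Sum>i\<in>{i\<in>F. 2 < snd i}. c i *\<^sub>R v0 \<alpha> i t)"
    using F by (subst sum.union_disjoint[symmetric]) (auto intro: sum.cong)
  also have "(\<Sum>i\<in>{i\<in>F. snd i \<le> 2}. c i *\<^sub>R v0 \<alpha> i t)
      = (\<Sum>i\<in>{i\<in>F. snd i \<le> 2}. (- (tan (2*\<alpha>) / 2) * (v0_sign i * c i * cos (v0_freq (\<alpha>/pi) i * t)),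
                                   v0_sign i * c i * sin (v0_freq (\<alpha>/pi) i * t)))"
    using FI by (intro sum.cong refl v0_exponential_form) auto
  also have "(\<Sum>i\<in>{i\<in>F. 2 < snd i}. c i *\<^sub>R v0 \<alpha> i t)
      = (\<Sum>i\<in>{i\<in>F. 2 < snd i}. (0, c i * sin (real (v0_half_freq i) / 2 * t)))"
  proof (intro sum.cong refl)
    fix i assume "i \<in> {i\<in>F. 2 < snd i}"
    then have "fst i \<ge> 1" "snd i = 3 \<or> snd i = 4" using FI by auto
    then show "c i *\<^sub>R v0 \<alpha> i t = (0, c i * sin (real (v0_half_freq i) / 2 * t))"
      by (simp add: v0_half_sine_form)
  qed
  finally show ?thesis by (simp add: prod_eq_iff fst_sum snd_sum sum_distrib_left)
qed

lemma energy_bounds: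
  fixes U V W :: "real \<Rightarrow> real" and c \<sigma> P Q :: real
  assumes cont: "continuous_on {0..2*pi} U" "continuous_on {0..2*pi} V" "continuous_on {0..2*pi} W"
    and UV: "integral {0..2*pi} (\<lambda>t. (U t)\<^sup>2) + integral {0..2*pi} (\<lambda>t. (V t)\<^sup>2) = 2*pi * P"
    and U_ge: "\<sigma> * P \<le> integral {0..2*pi} (\<lambda>t. (U t)\<^sup>2)"
    and W: "integral {0..2*pi} (\<lambda>t. (W t)\<^sup>2) = pi * Q"
    and \<kappa>: "0 < c\<^sup>2 * \<sigma>"
  defines "N \<equiv> c\<^sup>2 * integral {0..2*pi} (\<lambda>t. (U t)\<^sup>2) + integral {0..2*pi} (\<lambda>t. (V t + W t)\<^sup>2)"
  shows "P + Q \<le> (1 / (c\<^sup>2 * \<sigma>) + (1 + 2*pi / (c\<^sup>2 * \<sigma>)) / (pi/2)) * N"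
    and "N \<le> (2*pi * c\<^sup>2 + 4*pi) * (P + Q)"
proof -
  have nonneg: "0 \<le> integral {0..2*pi} (\<lambda>t. (U t)\<^sup>2)" "0 \<le> integral {0..2*pi} (\<lambda>t. (V t)\<^sup>2)"
    "0 \<le> integral {0..2*pi} (\<lambda>t. (W t)\<^sup>2)" "0 \<le> integral {0..2*pi} (\<lambda>t. (V t + W t)\<^sup>2)"
    by (auto intro!: integral_nonneg integrable_continuous_interval continuous_intros cont)
  have "0 \<le> 2*pi * P" "0 \<le> pi * Q" using UV W nonneg by linarith+
  then have PQ: "0 \<le> P" "0 \<le> Q" using pi_gt_zero by (simp_all add: zero_le_mult_iff)
  note VW = integral_sum_square_bounds[OF cont(2,3)]
  have "c\<^sup>2 * \<sigma> * P \<le> c\<^sup>2 * integral {0..2*pi} (\<lambda>t. (U t)\<^sup>2)"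
    using U_ge by (simp add: mult.assoc mult_left_mono)
  then have "c\<^sup>2 * \<sigma> * P \<le> N" using nonneg by (simp add: N_def)
  moreover have "pi/2 * Q - 2*pi * P \<le> N"
  proof -
    have "integral {0..2*pi} (\<lambda>t. (W t)\<^sup>2) / 2 = pi/2 * Q" by (simp add: W)
    moreover have "0 \<le> c\<^sup>2 * integral {0..2*pi} (\<lambda>t. (U t)\<^sup>2)" using nonneg by simp
    ultimately show ?thesis using VW(1) UV nonneg unfolding N_def by linarith
  qed
  ultimately show "P + Q \<le> (1 / (c\<^sup>2 * \<sigma>) + (1 + 2*pi / (c\<^sup>2 * \<sigma>)) / (pi/2)) * N"
    using \<kappa> by (intro sum_le_of_lower_bounds) auto
  have "c\<^sup>2 * integral {0..2*pi} (\<lambda>t. (U t)\<^sup>2) \<le> c\<^sup>2 * (2*pi * P)"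
    using UV nonneg by (intro mult_left_mono) auto
  moreover have "2 * integral {0..2*pi} (\<lambda>t. (W t)\<^sup>2) = 2*pi * Q" by (simp add: W)
  ultimately have "N \<le> c\<^sup>2 * (2*pi * P) + 4*pi * P + 2*pi * Q"
    using VW(2) UV nonneg unfolding N_def by linarith
  also have "\<dots> \<le> (2*pi * c\<^sup>2 + 4*pi) * (P + Q)"
    using PQ by (simp add: algebra_simps)
  finally show "N \<le> (2*pi * c\<^sup>2 + 4*pi) * (P + Q)" .
qed

lemma v0_riesz_bounds:
  fixes \<alpha> :: real and c :: "nat \<times> nat \<Rightarrow> real"
  assumes tan: "tan (2*\<alpha>) \<noteq> 0" and F: "finite F" and FI: "F \<subseteq> {1..} \<times> {1..4}"
  defines "\<kappa> \<equiv> (tan (2*\<alpha>) / 2)\<^sup>2 * (pi * (sin (2*\<alpha>))\<^sup>2 / 3)"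
  shows "(\<Sum>i\<in>F. (c i)\<^sup>2) \<le> (1/\<kappa> + (1 + 2*pi/\<kappa>) / (pi/2)) * Hnorm2 (\<lambda>t. \<Sum>i\<in>F. c i *\<^sub>R v0 \<alpha> i t)"
    and "Hnorm2 (\<lambda>t. \<Sum>i\<in>F. c i *\<^sub>R v0 \<alpha> i t) \<le> (2*pi * (tan (2*\<alpha>) / 2)\<^sup>2 + 4*pi) * (\<Sum>i\<in>F. (c i)\<^sup>2)"
proof -
  define c0 where "c0 = tan (2*\<alpha>) / 2"
  define F12 where "F12 = {i\<in>F. snd i \<le> 2}"
  define F34 where "F34 = {i\<in>F. 2 < snd i}"
  define z where "z i = v0_sign i * c i" for i
  define U where "U t = (\<Sum>i\<in>F12. z i * cos (v0_freq (\<alpha>/pi) i * t))" for t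
  define V where "V t = (\<Sum>i\<in>F12. z i * sin (v0_freq (\<alpha>/pi) i * t))" for t
  define W where "W t = (\<Sum>i\<in>F34. c i * sin (real (v0_half_freq i) / 2 * t))" for t
  define P where "P = (\<Sum>i\<in>F12. (c i)\<^sup>2)"
  define Q where "Q = (\<Sum>i\<in>F34. (c i)\<^sup>2)"
  have fin: "finite F12" "finite F34" using F by (simp_all add: F12_def F34_def)
  have F12: "F12 \<subseteq> {i. fst i \<ge> 1 \<and> (snd i = 1 \<or> snd i = 2)}"
    and F34: "F34 \<subseteq> {i. fst i \<ge> 1 \<and> (snd i = 3 \<or> snd i = 4)}"
    using FI by (auto simp: F12_def F34_def)
  have cont: "continuous_on {0..2*pi} U" "continuous_on {0..2*pi} V" "continuous_on {0..2*pi} W"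
    unfolding U_def V_def W_def by (intro continuous_intros)+
  have sum_split: "(\<Sum>i\<in>F. (c i)\<^sup>2) = P + Q"
    unfolding P_def Q_def F12_def F34_def using F
    by (subst sum.union_disjoint[symmetric]) (auto intro: sum.cong)
  have z_sq: "(\<Sum>i\<in>F12. (z i)\<^sup>2) = P"
    unfolding P_def z_def v0_sign_def by (intro sum.cong) (auto simp: power_mult_distrib)
  have N: "Hnorm2 (\<lambda>t. \<Sum>i\<in>F. c i *\<^sub>R v0 \<alpha> i t)
      = c0\<^sup>2 * integral {0..2*pi} (\<lambda>t. (U t)\<^sup>2) + integral {0..2*pi} (\<lambda>t. (V t + W t)\<^sup>2)"
  proof -
    have "Hnorm2 (\<lambda>t. \<Sum>i\<in>F. c i *\<^sub>R v0 \<alpha> i t) = Hnorm2 (\<lambda>t. (- c0 * U t, V t + W t))"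
      unfolding v0_combination_eq[OF F FI]
      by (simp add: c0_def U_def V_def W_def z_def F12_def F34_def sum_distrib_left mult.assoc)
    also have "\<dots> = integral {0..2*pi} (\<lambda>t. c0\<^sup>2 * (U t)\<^sup>2) + integral {0..2*pi} (\<lambda>t. (V t + W t)\<^sup>2)"
      by (subst Hnorm2_eq_integrals) (auto intro!: square_integrable_continuous continuous_intros cont
          simp: power_mult_distrib)
    finally show ?thesis by simp
  qed
  have "integral {0..2*pi} (\<lambda>t. (U t)\<^sup>2 + (V t)\<^sup>2) = 2*pi * P"
    unfolding U_def V_def z_sq[symmetric]
    by (rule integral_cos_sin_sums_square[OF fin(1) inj_on_subset[OF inj_on_v0_freq F12] v0_freq_diff_Ints])
  then have UV: "integral {0..2*pi} (\<lambda>t. (U t)\<^sup>2) + integral {0..2*pi} (\<lambda>t. (V t)\<^sup>2) = 2*pi * P"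
    by (simp add: integral_add integrable_continuous_interval continuous_intros cont)
  have U_ge: "pi * (sin (2*\<alpha>))\<^sup>2 / 3 * P \<le> integral {0..2*pi} (\<lambda>t. (U t)\<^sup>2)"
    using integral_cos_sum_square_ge[OF fin(1) inj_on_subset[OF inj_on_v0_freq F12] v0_freq_minus_Ints,
        of "\<alpha>/pi" z]
    by (simp add: z_sq U_def)
  have W: "integral {0..2*pi} (\<lambda>t. (W t)\<^sup>2) = pi * Q"
    unfolding W_def Q_def
    by (rule integral_sin_half_sum_square[OF fin(2) inj_on_subset[OF inj_on_v0_half_freq F34]])
      (use F34 in \<open>auto simp: v0_half_freq_def\<close>)
  have "sin (2*\<alpha>) \<noteq> 0" using tan by (auto simp: tan_def)
  then have "0 < c0\<^sup>2 * (pi * (sin (2*\<alpha>))\<^sup>2 / 3)" using tan by (simp add: c0_def)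
  note bounds = energy_bounds[OF cont UV U_ge W this]
  show "(\<Sum>i\<in>F. (c i)\<^sup>2) \<le> (1/\<kappa> + (1 + 2*pi/\<kappa>) / (pi/2)) * Hnorm2 (\<lambda>t. \<Sum>i\<in>F. c i *\<^sub>R v0 \<alpha> i t)"
    using bounds(1) unfolding sum_split N \<kappa>_def c0_def .
  show "Hnorm2 (\<lambda>t. \<Sum>i\<in>F. c i *\<^sub>R v0 \<alpha> i t) \<le> (2*pi * (tan (2*\<alpha>) / 2)\<^sup>2 + 4*pi) * (\<Sum>i\<in>F. (c i)\<^sup>2)"
    using bounds(2) unfolding sum_split N c0_def .
qed

section \<open>Weighted approximation in \<open>L\<^sup>2\<close>\<close>

definition clip :: "real \<Rightarrow> real \<Rightarrow> real" where
  "clip M x = max (- M) (min M x)"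

lemma abs_clip_le: "0 \<le> M \<Longrightarrow> \<bar>clip M x\<bar> \<le> M"
  by (auto simp: clip_def)

lemma abs_diff_clip_le: "0 \<le> M \<Longrightarrow> \<bar>x - clip M x\<bar> \<le> \<bar>x\<bar>"
  by (auto simp: clip_def)

lemma clip_eq_self: "\<bar>x\<bar> \<le> M \<Longrightarrow> clip M x = x"
  by (auto simp: clip_def)

lemma continuous_on_clip [continuous_intros]:
  "continuous_on S f \<Longrightarrow> continuous_on S (\<lambda>x. clip M (f x))"
  unfolding clip_def by (intro continuous_intros)

lemma isCont_clip: "isCont (clip M) x"
  unfolding clip_def by (intro continuous_intros)

lemma borel_measurable_clip:
  "f \<in> borel_measurable N \<Longrightarrow> (\<lambda>t. clip M (f t)) \<in> borel_measurable N"
  unfolding clip_def by (intro borel_measurable_max borel_measurable_min borel_measurable_const)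

text \<open>A continuous substitute for \<open>1/r\<close> that stays bounded where \<open>r\<close> vanishes.\<close>
definition soft_inverse :: "nat \<Rightarrow> real \<Rightarrow> real" where
  "soft_inverse n r = real n * r / (1 + real n * r\<^sup>2)"

lemma soft_inverse_denominator_pos: "0 < 1 + real n * (r::real)\<^sup>2"
  by (simp add: add_pos_nonneg)

lemma soft_inverse_bounds: "0 \<le> r * soft_inverse n r" "r * soft_inverse n r \<le> 1"
proof -
  have "r * soft_inverse n r = real n * r\<^sup>2 / (1 + real n * r\<^sup>2)"
    by (simp add: soft_inverse_def power2_eq_square)
  then show "0 \<le> r * soft_inverse n r" "r * soft_inverse n r \<le> 1"
    using soft_inverse_denominator_pos[of n r] by (simp_all add: pos_divide_le_eq)
qed

lemma tendsto_soft_inverse: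
  assumes "r \<noteq> 0"
  shows "(\<lambda>n. r * soft_inverse n r) \<longlonglongrightarrow> 1"
proof -
  have r: "r\<^sup>2 > 0" using assms by simp
  have "filterlim (\<lambda>n. 1 + real n * r\<^sup>2) at_top sequentially"
    by (intro filterlim_tendsto_add_at_top[OF tendsto_const] filterlim_at_top_mult_tendsto_pos[OF tendsto_const r]
        filterlim_real_sequentially)
  then have "(\<lambda>n. 1 - inverse (1 + real n * r\<^sup>2)) \<longlonglongrightarrow> 1 - 0"
    by (intro tendsto_diff tendsto_const tendsto_inverse_0_at_top)
  moreover have "1 - inverse (1 + real n * r\<^sup>2) = r * soft_inverse n r" for n
    using soft_inverse_denominator_pos[of n r]
    by (simp add: soft_inverse_def field_simps power2_eq_square)
  ultimately show ?thesis by simp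
qed

lemma continuous_on_soft_inverse [continuous_intros]:
  "continuous_on S f \<Longrightarrow> continuous_on S (\<lambda>x. soft_inverse n (f x))"
  unfolding soft_inverse_def
  by (intro continuous_intros) (auto simp: order_less_imp_not_eq2[OF soft_inverse_denominator_pos])

lemma integral_tendsto_zero_dominated:
  fixes F :: "nat \<Rightarrow> real \<Rightarrow> real"
  assumes int: "\<And>n. F n integrable_on S" and h: "h integrable_on S"
    and le: "\<And>n x. x \<in> S \<Longrightarrow> \<bar>F n x\<bar> \<le> h x"
    and N: "negligible N" and conv: "\<And>x. x \<in> S - N \<Longrightarrow> (\<lambda>n. F n x) \<longlonglongrightarrow> 0"
  shows "(\<lambda>n. integral S (F n)) \<longlonglongrightarrow> 0"
proof -
  have spike: "negligible {x \<in> S - (S - N). P x}" "negligible {x \<in> (S - N) - S. P x}" for P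
    by (auto intro: negligible_subset[OF N])
  have "(\<lambda>n. integral (S - N) (F n)) \<longlonglongrightarrow> integral (S - N) (\<lambda>x. 0)"
    using spike by (intro dominated_convergence(2)[where h=h] integrable_spike_set[OF int] 
        integrable_spike_set[OF h]) (auto intro: le conv)
  moreover have "integral (S - N) (F n) = integral S (F n)" for n
    by (rule integral_spike_set) (use spike in auto)
  ultimately show ?thesis by simp
qed

lemma tendsto_zero_imp_less:
  fixes X :: "nat \<Rightarrow> real"
  assumes "X \<longlonglongrightarrow> 0" "0 < e"
  shows "\<exists>n. X (Suc n) < e"
proof -
  obtain N where "\<And>n. n \<ge> N \<Longrightarrow> X n < e"
    using order_tendstoD(2)[OF assms] unfolding eventually_sequentially by blast
  then show ?thesis by (blast intro: le_SucI)
qed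

lemma square_integrable_clip_approx:
  assumes S: "S \<in> sets lebesgue" and f: "square_integrable S f" and e: "0 < e"
  shows "\<exists>M>0. integral S (\<lambda>t. (f t - clip M (f t))\<^sup>2) < e"
proof -
  define F where "F n t = (f t - clip (real n) (f t))\<^sup>2" for n t
  have f2: "(\<lambda>t. (f t)\<^sup>2) integrable_on S" and fm: "f \<in> borel_measurable (lebesgue_on S)"
    using f by (simp_all add: square_integrable_def)
  have le: "\<bar>F n t\<bar> \<le> (f t)\<^sup>2" for n t
    using power_mono[OF abs_diff_clip_le[of "real n" "f t"], of 2] by (simp add: F_def)
  have int: "F n integrable_on S" for n
    unfolding F_def using fm
    by (intro measurable_bounded_by_integrable_imp_integrable[OF _ S f2] le[unfolded F_def]
        borel_measurable_power borel_measurable_diff borel_measurable_clip)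
  have "(\<lambda>n. F n t) \<longlonglongrightarrow> 0" for t
  proof (rule tendsto_eventually)
    have "F n t = 0" if "nat \<lceil>\<bar>f t\<bar>\<rceil> \<le> n" for n
      using that by (simp add: F_def clip_eq_self)
    then show "\<forall>\<^sub>F n in sequentially. F n t = 0" unfolding eventually_sequentially by blast
  qed
  then have "(\<lambda>n. integral S (F n)) \<longlonglongrightarrow> 0"
    by (intro integral_tendsto_zero_dominated[OF int f2 le negligible_empty])
  then obtain n where "integral S (F (Suc n)) < e" using tendsto_zero_imp_less e by blast
  then show ?thesis unfolding F_def by (intro exI[of _ "real (Suc n)"]) simp
qed

text \<open>Lusin-type approximation: a measurable \<open>u\<close> is an a.e. limit of continuous \<open>g\<^sub>n\<close>, and dividing
  by \<open>\<rho>\<close> is replaced by multiplying with \<open>soft_inverse n \<rho>\<close>, which keeps everything bounded so that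
  dominated convergence applies.\<close>
lemma bounded_measurable_weighted_approx:
  fixes u \<rho> :: "real \<Rightarrow> real"
  assumes u: "u \<in> borel_measurable (lebesgue_on {0..L})" and ub: "\<And>t. \<bar>u t\<bar> \<le> M"
    and \<rho>: "continuous_on UNIV \<rho>" and nz: "\<And>t. 0 < t \<Longrightarrow> t < L \<Longrightarrow> \<rho> t \<noteq> 0" and e: "0 < e"
  shows "\<exists>k. continuous_on UNIV k \<and> integral {0..L} (\<lambda>t. (u t - \<rho> t * k t)\<^sup>2) < e"
proof -
  have M: "0 \<le> M" using ub[of 0] by linarith
  have "u measurable_on {0..L}"
    using u by (simp add: measurable_on_iff_borel_measurable)
  then obtain N g where N: "negligible N" and g: "\<And>n. continuous_on UNIV (g n)"
    and gu: "\<And>x. x \<notin> N \<Longrightarrow> (\<lambda>n. g n x) \<longlonglongrightarrow> (if x \<in> {0..L} then u x else 0)"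
    unfolding measurable_on_def by blast
  define k where "k n t = clip M (g n t) * soft_inverse n (\<rho> t)" for n t
  define F where "F n t = (u t - \<rho> t * k n t)\<^sup>2" for n t
  have \<rho>k: "\<rho> t * k n t = clip M (g n t) * (\<rho> t * soft_inverse n (\<rho> t))" for n t
    by (simp add: k_def mult_ac)
  have k: "continuous_on UNIV (k n)" for n
    unfolding k_def by (intro continuous_intros g \<rho>)
  have le: "\<bar>F n t\<bar> \<le> (2*M)\<^sup>2" for n t
  proof -
    have "\<bar>\<rho> t * k n t\<bar> \<le> M * 1"
      unfolding \<rho>k abs_mult using soft_inverse_bounds[of "\<rho> t" n] abs_clip_le[OF M] M
      by (intro mult_mono) auto
    then have "\<bar>u t - \<rho> t * k n t\<bar> \<le> 2*M" using ub[of t] by linarith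
    from power_mono[OF this abs_ge_zero, of 2] show ?thesis by (simp add: F_def power2_abs)
  qed
  have int: "F n integrable_on {0..L}" for n
  proof (rule measurable_bounded_by_integrable_imp_integrable[OF _ _ _ le])
    have "\<rho> \<in> borel_measurable (lebesgue_on {0..L})" "k n \<in> borel_measurable (lebesgue_on {0..L})"
      by (intro continuous_imp_measurable_on_sets_lebesgue continuous_on_subset[OF \<rho>]
          continuous_on_subset[OF k]; simp)+
    then show "F n \<in> borel_measurable (lebesgue_on {0..L})"
      unfolding F_def using u by (intro borel_measurable_power borel_measurable_diff borel_measurable_times)
  qed (auto intro: integrable_continuous_interval continuous_intros)
  have "(\<lambda>n. F n t) \<longlonglongrightarrow> 0" if t: "t \<in> {0..L} - (N \<union> {0, L})" for t
  proof -
    have "(\<lambda>n. clip M (g n t)) \<longlonglongrightarrow> clip M (u t)"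
      using gu[of t] t by (intro isCont_tendsto_compose[OF isCont_clip]) auto
    then have "(\<lambda>n. \<rho> t * k n t) \<longlonglongrightarrow> u t * 1"
      unfolding \<rho>k clip_eq_self[OF ub] using t nz[of t]
      by (intro tendsto_mult tendsto_soft_inverse) auto
    then have "(\<lambda>n. (u t - \<rho> t * k n t)\<^sup>2) \<longlonglongrightarrow> (u t - u t * 1)\<^sup>2"
      by (intro tendsto_power tendsto_diff tendsto_const)
    then show ?thesis by (simp add: F_def)
  qed
  then have "(\<lambda>n. integral {0..L} (F n)) \<longlonglongrightarrow> 0"
    using N by (intro integral_tendsto_zero_dominated[OF int _ le, of "N \<union> {0, L}"])
      (auto intro: integrable_continuous_interval continuous_intros)
  then obtain n where "integral {0..L} (F (Suc n)) < e" using tendsto_zero_imp_less e by blast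
  then show ?thesis using k unfolding F_def by blast
qed

lemma square_integrable_weighted_approx:
  fixes f \<rho> :: "real \<Rightarrow> real"
  assumes f: "square_integrable {0..L} f"
    and \<rho>: "continuous_on UNIV \<rho>" and nz: "\<And>t. 0 < t \<Longrightarrow> t < L \<Longrightarrow> \<rho> t \<noteq> 0" and e: "0 < e"
  shows "\<exists>k. continuous_on UNIV k \<and> integral {0..L} (\<lambda>t. (f t - \<rho> t * k t)\<^sup>2) < e"
proof -
  have S: "{0..L} \<in> sets lebesgue" by simp
  obtain M where M: "M > 0" and fM: "integral {0..L} (\<lambda>t. (f t - clip M (f t))\<^sup>2) < e/4"
    using square_integrable_clip_approx[OF S f, of "e/4"] e by auto
  have fm: "f \<in> borel_measurable (lebesgue_on {0..L})" using f by (simp add: square_integrable_def)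
  obtain k where k: "continuous_on UNIV k"
    and Mk: "integral {0..L} (\<lambda>t. (clip M (f t) - \<rho> t * k t)\<^sup>2) < e/4"
    using bounded_measurable_weighted_approx[OF borel_measurable_clip[OF fm, of M] _ \<rho> nz, where M=M and e="e/4"]
      abs_clip_le M e by auto
  have "square_integrable {0..L} (\<lambda>t. clip M (f t))"
    unfolding square_integrable_def
  proof
    show "(\<lambda>t. clip M (f t)) \<in> borel_measurable (lebesgue_on {0..L})"
      by (rule borel_measurable_clip[OF fm])
    have bound: "\<bar>(clip M (f t))\<^sup>2\<bar> \<le> M\<^sup>2" for t
      using power_mono[OF abs_clip_le[of M "f t"] abs_ge_zero, of 2] M by (simp add: power2_abs)
    show "(\<lambda>t. (clip M (f t))\<^sup>2) integrable_on {0..L}"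
      by (rule measurable_bounded_by_integrable_imp_integrable[OF _ S _ bound])
        (auto intro: borel_measurable_power borel_measurable_clip[OF fm] integrable_continuous_interval)
  qed
  moreover have "square_integrable {0..L} (\<lambda>t. \<rho> t * k t)"
    by (intro square_integrable_continuous continuous_intros continuous_on_subset[OF \<rho>]
        continuous_on_subset[OF k]) auto
  ultimately have "integral {0..L} (\<lambda>t. (f t - \<rho> t * k t)\<^sup>2)
      \<le> 2 * integral {0..L} (\<lambda>t. (f t - clip M (f t))\<^sup>2) + 2 * integral {0..L} (\<lambda>t. (clip M (f t) - \<rho> t * k t)\<^sup>2)"
    by (intro integral_square_diff_triangle[OF S f])
  also have "\<dots> < e" using fM Mk by linarith
  finally show ?thesis using k by blast
qed

section \<open>Cosine polynomials\<close>

inductive_set cos_polys :: "real \<Rightarrow> (real \<Rightarrow> real) set" for w :: real where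
  cos_polys_cos: "(\<lambda>t. c * cos (real k * w * t)) \<in> cos_polys w"
| cos_polys_add: "f \<in> cos_polys w \<Longrightarrow> g \<in> cos_polys w \<Longrightarrow> (\<lambda>t. f t + g t) \<in> cos_polys w"

lemma continuous_on_cos_polys: "f \<in> cos_polys w \<Longrightarrow> continuous_on S f"
  by (induction rule: cos_polys.induct) (auto intro!: continuous_intros)

lemma cos_polys_const: "(\<lambda>t. c) \<in> cos_polys w"
  using cos_polys_cos[of c 0 w] by simp

lemma cos_polys_cmult: "f \<in> cos_polys w \<Longrightarrow> (\<lambda>t. d * f t) \<in> cos_polys w"
proof (induction rule: cos_polys.induct)
  case (cos_polys_cos c k)
  then show ?case using cos_polys.cos_polys_cos[of "d * c" k w] by (simp add: mult.assoc)
next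
  case (cos_polys_add f g)
  then show ?case using cos_polys.cos_polys_add[OF cos_polys_add.IH] by (simp add: distrib_left)
qed

lemma cos_mult_cos_nat:
  "cos (real j * w * t) * cos (real k * w * t)
     = cos (real (if j \<le> k then k - j else j - k) * w * t) / 2 + cos (real (j + k) * w * t) / 2"
proof -
  have "cos (real j * w * t - real k * w * t) = cos (real (if j \<le> k then k - j else j - k) * w * t)"
  proof (cases "j \<le> k")
    case True
    then have "real j * w * t - real k * w * t = - (real (k - j) * w * t)" by (simp add: of_nat_diff algebra_simps)
    then show ?thesis using True by (simp only: cos_minus) simp
  next
    case False
    then show ?thesis by (simp add: of_nat_diff algebra_simps)
  qed
  then show ?thesis unfolding cos_times_cos by (simp add: algebra_simps add_divide_distrib)
qed

lemma cos_polys_mult_cos: "f \<in> cos_polys w \<Longrightarrow> (\<lambda>t. cos (real j * w * t) * f t) \<in> cos_polys w"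
proof (induction rule: cos_polys.induct)
  case (cos_polys_cos c k)
  have "(\<lambda>t. cos (real j * w * t) * (c * cos (real k * w * t)))
      = (\<lambda>t. c/2 * cos (real (if j \<le> k then k - j else j - k) * w * t) + c/2 * cos (real (j + k) * w * t))"
    by (rule ext, subst mult.left_commute, subst cos_mult_cos_nat) (simp add: field_simps)
  then show ?case by (simp only:) (intro cos_polys.intros)
next
  case (cos_polys_add f g)
  then show ?case using cos_polys.cos_polys_add[OF cos_polys_add.IH] by (simp add: distrib_left)
qed

lemma cos_polys_mult: "f \<in> cos_polys w \<Longrightarrow> g \<in> cos_polys w \<Longrightarrow> (\<lambda>t. f t * g t) \<in> cos_polys w"
proof (induction rule: cos_polys.induct)
  case (cos_polys_cos c k)
  then show ?case
    using cos_polys_cmult[OF cos_polys_mult_cos[OF cos_polys_cos.prems, of k], of c] by (simp add: mult.assoc)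
next
  case (cos_polys_add f1 f2)
  then show ?case using cos_polys.cos_polys_add[OF cos_polys_add.IH] by (simp add: distrib_right)
qed

lemma cos_polys_uniform_approx:
  assumes w: "0 < w" and g: "continuous_on {0..pi/w} g" and e: "0 < e"
  shows "\<exists>P\<in>cos_polys w. \<forall>t\<in>{0..pi/w}. \<bar>g t - P t\<bar> < e"
proof -
  interpret function_ring_on "cos_polys w" "{0..pi/w}"
  proof
    show "compact {0..pi/w}" by simp
    show "continuous_on {0..pi/w} f" if "f \<in> cos_polys w" for f
      using that by (rule continuous_on_cos_polys)
    show "(\<lambda>x. f x + g x) \<in> cos_polys w" if "f \<in> cos_polys w" "g \<in> cos_polys w" for f g
      using that by (rule cos_polys_add)
    show "(\<lambda>x. f x * g x) \<in> cos_polys w" if "f \<in> cos_polys w" "g \<in> cos_polys w" for f g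
      using that by (rule cos_polys_mult)
    show "(\<lambda>_. c) \<in> cos_polys w" for c by (rule cos_polys_const)
    show "\<exists>f\<in>cos_polys w. f x \<noteq> f y" if "x \<in> {0..pi/w}" "y \<in> {0..pi/w}" "x \<noteq> y" for x y
    proof
      show "(\<lambda>t. 1 * cos (real 1 * w * t)) \<in> cos_polys w" by (rule cos_polys_cos)
      have "0 \<le> w * x" "w * x \<le> pi" "0 \<le> w * y" "w * y \<le> pi" "w * x \<noteq> w * y"
        using that w by (auto simp: field_simps)
      then show "1 * cos (real 1 * w * x) \<noteq> 1 * cos (real 1 * w * y)"
        using cos_inj_pi[of "w * x" "w * y"] by auto
    qed
  qed
  show ?thesis using Stone_Weierstrass_basic[OF g e] .
qed

lemma cos_polys_reflect: "f \<in> cos_polys 1 \<Longrightarrow> f (2*pi - t) = f t"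
proof (induction rule: cos_polys.induct)
  case (cos_polys_cos c k)
  have "real k * 1 * (2*pi - t) = 2 * real k * pi - real k * t" by (simp add: algebra_simps)
  then show ?case by (simp add: cos_diff)
qed simp

lemma integral_square_le_of_abs_le:
  fixes p :: "real \<Rightarrow> real"
  assumes "a \<le> b" "continuous_on {a..b} p" "\<And>t. t \<in> {a..b} \<Longrightarrow> \<bar>p t\<bar> \<le> d"
  shows "integral {a..b} (\<lambda>t. (p t)\<^sup>2) \<le> (b - a) * d\<^sup>2"
proof -
  have "integral {a..b} (\<lambda>t. (p t)\<^sup>2) \<le> integral {a..b} (\<lambda>t. d\<^sup>2)"
    using assms power_mono[OF assms(3) abs_ge_zero, of _ 2]
    by (intro integral_le integrable_continuous_interval continuous_intros) (auto simp: power2_abs)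
  then show ?thesis using assms(1) by simp
qed

lemma cos_polys_weighted_approx:
  fixes f \<rho> :: "real \<Rightarrow> real"
  assumes w: "0 < w" and f: "square_integrable {0..pi/w} f" and \<rho>: "continuous_on UNIV \<rho>"
    and \<rho>1: "\<And>t. \<bar>\<rho> t\<bar> \<le> 1" and nz: "\<And>t. 0 < t \<Longrightarrow> t < pi/w \<Longrightarrow> \<rho> t \<noteq> 0" and e: "0 < e"
  shows "\<exists>R\<in>cos_polys w. integral {0..pi/w} (\<lambda>t. (f t - \<rho> t * R t)\<^sup>2) < e"
proof -
  obtain k where k: "continuous_on UNIV k" and fk: "integral {0..pi/w} (\<lambda>t. (f t - \<rho> t * k t)\<^sup>2) < e/4"
    using square_integrable_weighted_approx[OF f \<rho> nz, of "e/4"] e by auto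
  define d where "d = sqrt (w * e / (8*pi))"
  have d: "0 < d" "pi/w * d\<^sup>2 = e/8" using w e by (simp_all add: d_def)
  obtain R where R: "R \<in> cos_polys w" and kR: "\<forall>t\<in>{0..pi/w}. \<bar>k t - R t\<bar> < d"
    using cos_polys_uniform_approx[OF w continuous_on_subset[OF k] d(1)] by auto
  have cR: "continuous_on S R" for S by (rule continuous_on_cos_polys[OF R])
  have "integral {0..pi/w} (\<lambda>t. (\<rho> t * k t - \<rho> t * R t)\<^sup>2) \<le> (pi/w - 0) * d\<^sup>2"
  proof (rule integral_square_le_of_abs_le)
    show "continuous_on {0..pi/w} (\<lambda>t. \<rho> t * k t - \<rho> t * R t)"
      by (intro continuous_intros continuous_on_subset[OF \<rho>] continuous_on_subset[OF k] cR) auto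
    show "\<bar>\<rho> t * k t - \<rho> t * R t\<bar> \<le> d" if "t \<in> {0..pi/w}" for t
    proof -
      have "\<bar>\<rho> t * k t - \<rho> t * R t\<bar> = \<bar>\<rho> t\<bar> * \<bar>k t - R t\<bar>" by (simp add: abs_mult flip: right_diff_distrib)
      also have "\<dots> \<le> 1 * d" using \<rho>1[of t] kR that by (intro mult_mono) (auto intro: less_imp_le)
      finally show ?thesis by simp
    qed
  qed (use w in simp)
  then have \<rho>kR: "integral {0..pi/w} (\<lambda>t. (\<rho> t * k t - \<rho> t * R t)\<^sup>2) \<le> e/8"
    by (simp only: diff_zero d(2))
  have "integral {0..pi/w} (\<lambda>t. (f t - \<rho> t * R t)\<^sup>2)
      \<le> 2 * integral {0..pi/w} (\<lambda>t. (f t - \<rho> t * k t)\<^sup>2)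
        + 2 * integral {0..pi/w} (\<lambda>t. (\<rho> t * k t - \<rho> t * R t)\<^sup>2)"
    by (intro integral_square_diff_triangle f square_integrable_continuous continuous_intros
        continuous_on_subset[OF \<rho>] continuous_on_subset[OF k] cR) auto
  then have "integral {0..pi/w} (\<lambda>t. (f t - \<rho> t * R t)\<^sup>2) < e"
    using fk \<rho>kR e by linarith
  then show ?thesis using R by blast
qed

lemma integral_split_reflect:
  fixes h :: "real \<Rightarrow> real"
  assumes c: "0 \<le> c" and h: "continuous_on {0..2*c} h"
  shows "integral {0..2*c} h = integral {0..c} (\<lambda>t. h t + h (2*c - t))"
proof -
  have int: "h integrable_on {0..c}" "h integrable_on {c..2*c}"
    using c by (auto intro!: integrable_continuous_interval continuous_on_subset[OF h])
  have "continuous_on {0..c} (\<lambda>t. h (2*c - t))"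
    by (rule continuous_on_compose2[OF h]) (auto intro!: continuous_intros)
  then have "(\<lambda>t. h (2*c - t)) integrable_on {0..c}" by (rule integrable_continuous_interval)
  moreover have "integral {0..2*c} h = integral {0..c} h + integral {c..2*c} h"
    using c integrable_continuous_interval[OF h]
    by (intro Henstock_Kurzweil_Integration.integral_combine[symmetric]) auto
  moreover have "integral {c..2*c} h = integral {0..c} (\<lambda>t. h (2*c - t))"
    using integral_reflect_shift_real[of 0 c h "2*c"] by simp
  ultimately show ?thesis using int by (simp add: integral_add)
qed

lemma square_comb_le:
  fixes c s x y :: real
  assumes "\<bar>c\<bar> \<le> 1" "\<bar>s\<bar> \<le> 1"
  shows "(c * x + s * y)\<^sup>2 \<le> 2 * x\<^sup>2 + 2 * y\<^sup>2"
proof -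
  have "(c * x)\<^sup>2 \<le> x\<^sup>2" "(s * y)\<^sup>2 \<le> y\<^sup>2"
    using assms power_mono[OF assms(1) abs_ge_zero, of 2] power_mono[OF assms(2) abs_ge_zero, of 2]
    by (simp_all add: power_mult_distrib mult_left_le_one_le power2_abs)
  moreover have "(c * x + s * y)\<^sup>2 \<le> 2 * (c * x)\<^sup>2 + 2 * (s * y)\<^sup>2"
    using sum_squares_ge_zero[of "c * x - s * y" 0] by (simp add: power2_eq_square algebra_simps)
  ultimately show ?thesis by linarith
qed

text \<open>Cramer's rule for the pair of equations at \<open>t\<close> and \<open>2\<pi> - t\<close>; the determinant is
  \<open>sin (a t + a (2\<pi> - t)) = sin (2\<pi>a)\<close>.\<close>
lemma reflection_pair_decomposition:
  fixes a :: real and g :: "real \<Rightarrow> real"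
  assumes S: "sin (2*pi*a) \<noteq> 0" and g: "continuous_on UNIV g"
  obtains A B where "continuous_on UNIV A" "continuous_on UNIV B"
    "\<And>t. g t = cos (a*t) * A t - sin (a*t) * B t"
    "\<And>t. g (2*pi - t) = cos (a*(2*pi - t)) * A t + sin (a*(2*pi - t)) * B t"
proof
  define S where "S = sin (2*pi*a)"
  have det: "sin (a*t) * cos (a*(2*pi - t)) + cos (a*t) * sin (a*(2*pi - t)) = S" for t
    using sin_add[of "a*t" "a*(2*pi - t)"] by (simp add: S_def algebra_simps)
  have g': "continuous_on UNIV (\<lambda>t. g (2*pi - t))"
    by (rule continuous_on_compose2[OF g]) (auto intro!: continuous_intros)
  define A where "A t = (sin (a*(2*pi - t)) * g t + sin (a*t) * g (2*pi - t)) / S" for t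
  define B where "B t = (cos (a*t) * g (2*pi - t) - cos (a*(2*pi - t)) * g t) / S" for t
  show "continuous_on UNIV A" "continuous_on UNIV B"
    unfolding A_def B_def using S by (auto simp: S_def intro!: continuous_intros g g')
  have S0: "S \<noteq> 0" using S by (simp add: S_def)
  show "g t = cos (a*t) * A t - sin (a*t) * B t" for t
  proof -
    have "cos (a*t) * A t - sin (a*t) * B t
        = g t * (sin (a*t) * cos (a*(2*pi - t)) + cos (a*t) * sin (a*(2*pi - t))) / S"
      unfolding A_def B_def using S0 by (simp add: field_simps)
    then show ?thesis using det[of t] S0 by simp
  qed
  show "g (2*pi - t) = cos (a*(2*pi - t)) * A t + sin (a*(2*pi - t)) * B t" for t
  proof -
    have "cos (a*(2*pi - t)) * A t + sin (a*(2*pi - t)) * B t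
        = g (2*pi - t) * (sin (a*t) * cos (a*(2*pi - t)) + cos (a*t) * sin (a*(2*pi - t))) / S"
      unfolding A_def B_def using S0 by (simp add: field_simps)
    then show ?thesis using det[of t] S0 by simp
  qed
qed

lemma shifted_cos_polys_approx:
  fixes a :: real and f :: "real \<Rightarrow> real"
  assumes a: "sin (2*pi*a) \<noteq> 0" and f: "square_integrable {0..2*pi} f" and e: "0 < e"
  shows "\<exists>P\<in>cos_polys 1. \<exists>R\<in>cos_polys 1.
           integral {0..2*pi} (\<lambda>t. (f t - (cos (a*t) * P t - sin (a*t) * (sin t * R t)))\<^sup>2) < e"
proof -
  obtain g where g: "continuous_on UNIV g" and fg: "integral {0..2*pi} (\<lambda>t. (f t - g t)\<^sup>2) < e/4"
    using square_integrable_weighted_approx[OF f, of "\<lambda>_. 1" "e/4"] e by auto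
  obtain A B where A: "continuous_on UNIV A" and B: "continuous_on UNIV B"
    and gA: "\<And>t. g t = cos (a*t) * A t - sin (a*t) * B t"
    and gB: "\<And>t. g (2*pi - t) = cos (a*(2*pi - t)) * A t + sin (a*(2*pi - t)) * B t"
    using reflection_pair_decomposition[OF a g] by blast
  obtain P where P: "P \<in> cos_polys 1" and AP: "integral {0..pi} (\<lambda>t. (A t - 1 * P t)\<^sup>2) < e/64"
    using cos_polys_weighted_approx[of 1 A "\<lambda>_. 1" "e/64"] e
      square_integrable_continuous[OF continuous_on_subset[OF A]] by auto
  have "continuous_on UNIV (\<lambda>t::real. sin t)" by (intro continuous_intros)
  moreover have "sin t \<noteq> 0" if "0 < t" "t < pi" for t
    using sin_gt_zero[OF that] by simp
  ultimately obtain R where R: "R \<in> cos_polys 1"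
    and BR: "integral {0..pi} (\<lambda>t. (B t - sin t * R t)\<^sup>2) < e/64"
    using cos_polys_weighted_approx[of 1 B sin "e/64"] e
      square_integrable_continuous[OF continuous_on_subset[OF B]] by auto
  have cP: "continuous_on S P" and cR: "continuous_on S R" for S
    using P R by (simp_all add: continuous_on_cos_polys)
  define Q where "Q t = sin t * R t" for t
  define E where "E t = g t - (cos (a*t) * P t - sin (a*t) * Q t)" for t
  have E1: "E t = cos (a*t) * (A t - P t) + (- sin (a*t)) * (B t - Q t)" for t
    unfolding E_def gA by (simp add: algebra_simps)
  have E2: "E (2*pi - t) = cos (a*(2*pi - t)) * (A t - P t) + sin (a*(2*pi - t)) * (B t - Q t)" for t
    using cos_polys_reflect[OF P, of t] cos_polys_reflect[OF R, of t] sin_diff[of "2*pi" t]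
    unfolding E_def gB Q_def by (simp add: algebra_simps)
  have cE: "continuous_on S E" for S
    unfolding E_def Q_def by (intro continuous_intros continuous_on_subset[OF g] cP cR) auto
  have int: "(\<lambda>t. (A t - P t)\<^sup>2) integrable_on {0..pi}" "(\<lambda>t. (B t - Q t)\<^sup>2) integrable_on {0..pi}"
    unfolding Q_def by (intro integrable_continuous_interval continuous_intros
        continuous_on_subset[OF A] continuous_on_subset[OF B] cP cR; simp)+
  have "integral {0..2*pi} (\<lambda>t. (E t)\<^sup>2) = integral {0..pi} (\<lambda>t. (E t)\<^sup>2 + (E (2*pi - t))\<^sup>2)"
    by (rule integral_split_reflect) (auto intro!: continuous_intros cE)
  also have "\<dots> \<le> integral {0..pi} (\<lambda>t. 4 * ((A t - P t)\<^sup>2 + (B t - Q t)\<^sup>2))"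
  proof (rule integral_le)
    show "(E t)\<^sup>2 + (E (2*pi - t))\<^sup>2 \<le> 4 * ((A t - P t)\<^sup>2 + (B t - Q t)\<^sup>2)" for t
      using square_comb_le[of "cos (a*t)" "- sin (a*t)" "A t - P t" "B t - Q t"]
        square_comb_le[of "cos (a*(2*pi - t))" "sin (a*(2*pi - t))" "A t - P t" "B t - Q t"]
      by (subst E2, subst E1) simp
    show "(\<lambda>t. (E t)\<^sup>2 + (E (2*pi - t))\<^sup>2) integrable_on {0..pi}"
      by (intro integrable_continuous_interval continuous_intros cE
          continuous_on_compose2[OF cE[of UNIV]]) auto
  qed (use int in \<open>auto intro: integrable_add integrable_on_cmult_left\<close>)
  also have "\<dots> = 4 * (integral {0..pi} (\<lambda>t. (A t - P t)\<^sup>2) + integral {0..pi} (\<lambda>t. (B t - Q t)\<^sup>2))"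
    using int by (simp add: integral_add)
  also have "\<dots> < e/8" using AP BR by (simp add: Q_def)
  finally have gE: "integral {0..2*pi} (\<lambda>t. (g t - (cos (a*t) * P t - sin (a*t) * Q t))\<^sup>2) < e/8"
    by (simp add: E_def)
  have "integral {0..2*pi} (\<lambda>t. (f t - (cos (a*t) * P t - sin (a*t) * Q t))\<^sup>2)
      \<le> 2 * integral {0..2*pi} (\<lambda>t. (f t - g t)\<^sup>2)
        + 2 * integral {0..2*pi} (\<lambda>t. (g t - (cos (a*t) * P t - sin (a*t) * Q t))\<^sup>2)"
    unfolding Q_def
    by (intro integral_square_diff_triangle f square_integrable_continuous continuous_intros
        continuous_on_subset[OF g] cP cR) auto
  also have "\<dots> < e" using fg gE e by simp
  finally show ?thesis using P R unfolding Q_def by blast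
qed

section \<open>Completeness\<close>

definition lin_combs :: "'i set \<Rightarrow> ('i \<Rightarrow> 'a \<Rightarrow> 'b::real_vector) \<Rightarrow> ('a \<Rightarrow> 'b) set" where
  "lin_combs I e = {\<phi>. \<exists>F c. finite F \<and> F \<subseteq> I \<and> \<phi> = (\<lambda>t. \<Sum>i\<in>F. c i *\<^sub>R e i t)}"

lemma lin_combs_zero: "(\<lambda>t. 0) \<in> lin_combs I e"
  unfolding lin_combs_def by (intro CollectI exI[of _ "{}"]) auto

lemma lin_combs_base: "i \<in> I \<Longrightarrow> e i \<in> lin_combs I e"
  unfolding lin_combs_def by (intro CollectI exI[of _ "{i}"] exI[of _ "\<lambda>_. 1"]) auto

lemma lin_combs_scale: "\<phi> \<in> lin_combs I e \<Longrightarrow> (\<lambda>t. d *\<^sub>R \<phi> t) \<in> lin_combs I e"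
  unfolding lin_combs_def by (auto simp: scaleR_sum_right intro!: exI[of _ "\<lambda>i. d * _ i"])

lemma lin_combs_add:
  assumes "\<phi> \<in> lin_combs I e" "\<psi> \<in> lin_combs I e"
  shows "(\<lambda>t. \<phi> t + \<psi> t) \<in> lin_combs I e"
proof -
  obtain F1 c1 where F1: "finite F1" "F1 \<subseteq> I" "\<phi> = (\<lambda>t. \<Sum>i\<in>F1. c1 i *\<^sub>R e i t)"
    using assms(1) unfolding lin_combs_def by blast
  obtain F2 c2 where F2: "finite F2" "F2 \<subseteq> I" "\<psi> = (\<lambda>t. \<Sum>i\<in>F2. c2 i *\<^sub>R e i t)"
    using assms(2) unfolding lin_combs_def by blast
  define c where "c i = (if i \<in> F1 then c1 i else 0) + (if i \<in> F2 then c2 i else 0)" for i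
  have "\<phi> t + \<psi> t = (\<Sum>i\<in>F1 \<union> F2. c i *\<^sub>R e i t)" for t
  proof -
    have "(\<Sum>i\<in>F1 \<union> F2. if i \<in> F1 then c1 i *\<^sub>R e i t else 0) = \<phi> t"
      using F1 F2 by (subst sum.inter_restrict[symmetric]) auto
    moreover have "(\<Sum>i\<in>F1 \<union> F2. if i \<in> F2 then c2 i *\<^sub>R e i t else 0) = \<psi> t"
      using F1 F2 by (subst sum.inter_restrict[symmetric]) auto
    ultimately have "\<phi> t + \<psi> t = (\<Sum>i\<in>F1 \<union> F2. if i \<in> F1 then c1 i *\<^sub>R e i t else 0)
        + (\<Sum>i\<in>F1 \<union> F2. if i \<in> F2 then c2 i *\<^sub>R e i t else 0)"
      by simp
    also have "\<dots> = (\<Sum>i\<in>F1 \<union> F2. c i *\<^sub>R e i t)"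
      by (simp add: c_def scaleR_add_left sum.distrib if_distrib[of "\<lambda>x. x *\<^sub>R e _ t"] cong: if_cong)
    finally show ?thesis .
  qed
  then show ?thesis
    using F1 F2 unfolding lin_combs_def by (intro CollectI exI[of _ "F1 \<union> F2"] exI[of _ c]) auto
qed

lemma lin_combs_diff: "\<phi> \<in> lin_combs I e \<Longrightarrow> \<psi> \<in> lin_combs I e \<Longrightarrow> (\<lambda>t. \<phi> t - \<psi> t) \<in> lin_combs I e"
  using lin_combs_add[of \<phi> I e "\<lambda>t. (-1) *\<^sub>R \<psi> t"] lin_combs_scale[of \<psi> I e "-1"] by simp

abbreviation v0_span :: "real \<Rightarrow> (real \<Rightarrow> real \<times> real) set" where
  "v0_span \<alpha> \<equiv> lin_combs ({1..} \<times> {1..4}) (v0 \<alpha>)"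

lemma v0_freq_surj: "\<exists>i. fst i \<ge> 1 \<and> (snd i = 1 \<or> snd i = 2) \<and> v0_freq a i = a + of_int j"
proof (cases "0 \<le> j")
  case True
  then show ?thesis by (intro exI[of _ "(nat j + 1, 1)"]) (simp add: v0_freq_def)
next
  case False
  then show ?thesis by (intro exI[of _ "(nat (- j), 2)"]) (simp add: v0_freq_def)
qed

lemma v0_half_freq_surj:
  assumes "0 < m"
  shows "\<exists>i. fst i \<ge> 1 \<and> (snd i = 3 \<or> snd i = 4) \<and> v0_half_freq i = m"
proof (cases "even m")
  case True
  then show ?thesis using assms by (intro exI[of _ "(m div 2, 4)"]) (auto simp: v0_half_freq_def)
next
  case False
  then show ?thesis by (intro exI[of _ "((m + 1) div 2, 3)"]) (auto simp: v0_half_freq_def elim!: oddE)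
qed

lemma cos_shift_in_v0_span:
  assumes tan: "tan (2*\<alpha>) \<noteq> 0"
  shows "\<exists>\<phi>\<in>v0_span \<alpha>. \<forall>t. fst (\<phi> t) = cos ((\<alpha>/pi + of_int j) * t)"
proof -
  obtain i where i: "fst i \<ge> 1" "snd i = 1 \<or> snd i = 2" and \<nu>: "v0_freq (\<alpha>/pi) i = \<alpha>/pi + of_int j"
    using v0_freq_surj by blast
  have "v0_sign i \<noteq> 0" by (simp add: v0_sign_def)
  then have "fst ((- 2 / (tan (2*\<alpha>) * v0_sign i)) *\<^sub>R v0 \<alpha> i t) = cos ((\<alpha>/pi + of_int j) * t)" for t
    using tan by (simp only: v0_exponential_form[OF i(2)] \<nu>) (simp add: field_simps)
  moreover have "i \<in> {1..} \<times> {1..4}" using i by (cases i) auto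
  ultimately show ?thesis
    by (intro bexI[OF _ lin_combs_scale[OF lin_combs_base, where d="- 2 / (tan (2*\<alpha>) * v0_sign i)"]])
      auto
qed

lemma half_sine_in_v0_span: "\<exists>\<phi>\<in>v0_span \<alpha>. \<forall>t. \<phi> t = (0, sin (of_int m / 2 * t))"
proof -
  have pos: "\<exists>\<phi>\<in>v0_span \<alpha>. \<forall>t. \<phi> t = (0, sin (real k / 2 * t))" if k: "0 < k" for k
  proof -
    obtain i where i: "fst i \<ge> 1" "snd i = 3 \<or> snd i = 4" "v0_half_freq i = k"
      using v0_half_freq_surj[OF k] by blast
    then have "i \<in> {1..} \<times> {1..4}" by (cases i) auto
    then show ?thesis using v0_half_sine_form[OF i(1,2)] i(3) by (intro bexI[OF _ lin_combs_base]) auto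
  qed
  consider "0 < m" | "m = 0" | "m < 0" by linarith
  then show ?thesis
  proof cases
    case 1
    then show ?thesis using pos[of "nat m"] by simp
  next
    case 2
    then show ?thesis by (intro bexI[OF _ lin_combs_zero]) (simp add: zero_prod_def)
  next
    case 3
    then have "0 < nat (- m)" by simp
    then obtain \<phi> where \<phi>: "\<phi> \<in> v0_span \<alpha>" "\<forall>t. \<phi> t = (0, sin (real (nat (- m)) / 2 * t))"
      using pos by blast
    have "real (nat (- m)) / 2 * t = - (of_int m / 2 * t)" for t using 3 by simp
    then have "\<forall>t. (-1) *\<^sub>R \<phi> t = (0, sin (of_int m / 2 * t))" using \<phi>(2) by simp
    then show ?thesis by (rule bexI[OF _ lin_combs_scale[OF \<phi>(1)]])
  qed
qed

lemma sin_product_in_v0_span: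
  assumes tan: "tan (2*\<alpha>) \<noteq> 0"
  shows "\<exists>\<phi>\<in>v0_span \<alpha>. \<forall>t. fst (\<phi> t) = sin (\<alpha>/pi * t) * sin (of_int m * t)"
proof -
  obtain \<phi>1 where \<phi>1: "\<phi>1 \<in> v0_span \<alpha>" "\<forall>t. fst (\<phi>1 t) = cos ((\<alpha>/pi + of_int (- m)) * t)"
    using cos_shift_in_v0_span[OF tan] by blast
  obtain \<phi>2 where \<phi>2: "\<phi>2 \<in> v0_span \<alpha>" "\<forall>t. fst (\<phi>2 t) = cos ((\<alpha>/pi + of_int m) * t)"
    using cos_shift_in_v0_span[OF tan] by blast
  have "fst ((1/2) *\<^sub>R (\<phi>1 t - \<phi>2 t)) = sin (\<alpha>/pi * t) * sin (of_int m * t)" for t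
  proof -
    have "fst ((1/2) *\<^sub>R (\<phi>1 t - \<phi>2 t))
        = (1/2) * (cos ((\<alpha>/pi + of_int (- m)) * t) - cos ((\<alpha>/pi + of_int m) * t))"
      by (simp only: fst_scaleR fst_diff \<phi>1(2)[rule_format] \<phi>2(2)[rule_format] real_scaleR_def)
    also have "\<dots> = sin (\<alpha>/pi * t) * sin (of_int m * t)"
      by (simp add: cos_add cos_diff algebra_simps)
    finally show ?thesis .
  qed
  then show ?thesis by (intro bexI[OF _ lin_combs_scale[OF lin_combs_diff[OF \<phi>1(1) \<phi>2(1)]]] allI)
qed
lemma cos_polys_cos_shift_in_v0_span:
  assumes tan: "tan (2*\<alpha>) \<noteq> 0"
  shows "P \<in> cos_polys 1 \<Longrightarrow> \<exists>\<phi>\<in>v0_span \<alpha>. \<forall>t. fst (\<phi> t) = cos (\<alpha>/pi * t) * P t"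
proof (induction rule: cos_polys.induct)
  case (cos_polys_cos c k)
  obtain \<phi>1 where \<phi>1: "\<phi>1 \<in> v0_span \<alpha>" "\<forall>t. fst (\<phi>1 t) = cos ((\<alpha>/pi + of_int (- int k)) * t)"
    using cos_shift_in_v0_span[OF tan] by blast
  obtain \<phi>2 where \<phi>2: "\<phi>2 \<in> v0_span \<alpha>" "\<forall>t. fst (\<phi>2 t) = cos ((\<alpha>/pi + of_int (int k)) * t)"
    using cos_shift_in_v0_span[OF tan] by blast
  have "fst ((c/2) *\<^sub>R (\<phi>1 t + \<phi>2 t)) = cos (\<alpha>/pi * t) * (c * cos (real k * 1 * t))" for t
  proof -
    have "fst ((c/2) *\<^sub>R (\<phi>1 t + \<phi>2 t))
        = c/2 * (cos ((\<alpha>/pi + of_int (- int k)) * t) + cos ((\<alpha>/pi + of_int (int k)) * t))"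
      by (simp only: fst_scaleR fst_add \<phi>1(2)[rule_format] \<phi>2(2)[rule_format] real_scaleR_def)
    also have "\<dots> = cos (\<alpha>/pi * t) * (c * cos (real k * 1 * t))"
      by (simp add: cos_add cos_diff algebra_simps)
    finally show ?thesis .
  qed
  then show ?case by (intro bexI[OF _ lin_combs_scale[OF lin_combs_add[OF \<phi>1(1) \<phi>2(1)]]] allI)
next
  case (cos_polys_add f g)
  then obtain \<phi>1 \<phi>2 where \<phi>1: "\<phi>1 \<in> v0_span \<alpha>" "\<forall>t. fst (\<phi>1 t) = cos (\<alpha>/pi * t) * f t"
    and \<phi>2: "\<phi>2 \<in> v0_span \<alpha>" "\<forall>t. fst (\<phi>2 t) = cos (\<alpha>/pi * t) * g t" by blast
  then have "\<forall>t. fst (\<phi>1 t + \<phi>2 t) = cos (\<alpha>/pi * t) * (f t + g t)" by (simp add: distrib_left)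
  then show ?case by (rule bexI[OF _ lin_combs_add[OF \<phi>1(1) \<phi>2(1)]])
qed

lemma cos_polys_sin_shift_in_v0_span:
  assumes tan: "tan (2*\<alpha>) \<noteq> 0"
  shows "R \<in> cos_polys 1 \<Longrightarrow> \<exists>\<phi>\<in>v0_span \<alpha>. \<forall>t. fst (\<phi> t) = sin (\<alpha>/pi * t) * (sin t * R t)"
proof (induction rule: cos_polys.induct)
  case (cos_polys_cos c k)
  obtain \<phi>1 where \<phi>1: "\<phi>1 \<in> v0_span \<alpha>" "\<forall>t. fst (\<phi>1 t) = sin (\<alpha>/pi * t) * sin (of_int (1 + int k) * t)"
    using sin_product_in_v0_span[OF tan] by blast
  obtain \<phi>2 where \<phi>2: "\<phi>2 \<in> v0_span \<alpha>" "\<forall>t. fst (\<phi>2 t) = sin (\<alpha>/pi * t) * sin (of_int (1 - int k) * t)"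
    using sin_product_in_v0_span[OF tan] by blast
  have "fst ((c/2) *\<^sub>R (\<phi>1 t + \<phi>2 t)) = sin (\<alpha>/pi * t) * (sin t * (c * cos (real k * 1 * t)))"
    for t
  proof -
    have "fst ((c/2) *\<^sub>R (\<phi>1 t + \<phi>2 t))
        = c/2 * (sin (\<alpha>/pi * t) * sin (of_int (1 + int k) * t)
                 + sin (\<alpha>/pi * t) * sin (of_int (1 - int k) * t))"
      by (simp only: fst_scaleR fst_add \<phi>1(2)[rule_format] \<phi>2(2)[rule_format] real_scaleR_def)
    also have "\<dots> = sin (\<alpha>/pi * t) * (sin t * (c * cos (real k * 1 * t)))"
      by (simp add: sin_add sin_diff algebra_simps)
    finally show ?thesis .
  qed
  then show ?case by (intro bexI[OF _ lin_combs_scale[OF lin_combs_add[OF \<phi>1(1) \<phi>2(1)]]] allI)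
next
  case (cos_polys_add f g)
  then obtain \<phi>1 \<phi>2 where \<phi>1: "\<phi>1 \<in> v0_span \<alpha>" "\<forall>t. fst (\<phi>1 t) = sin (\<alpha>/pi * t) * (sin t * f t)"
    and \<phi>2: "\<phi>2 \<in> v0_span \<alpha>" "\<forall>t. fst (\<phi>2 t) = sin (\<alpha>/pi * t) * (sin t * g t)" by blast
  then have "\<forall>t. fst (\<phi>1 t + \<phi>2 t) = sin (\<alpha>/pi * t) * (sin t * (f t + g t))"
    by (simp add: distrib_left)
  then show ?case by (rule bexI[OF _ lin_combs_add[OF \<phi>1(1) \<phi>2(1)]])
qed

lemma cos_polys_half_sine_in_v0_span:
  "R \<in> cos_polys (1/2) \<Longrightarrow> \<exists>\<phi>\<in>v0_span \<alpha>. \<forall>t. \<phi> t = (0, sin (t/2) * R t)"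
proof (induction rule: cos_polys.induct)
  case (cos_polys_cos c k)
  obtain \<phi>1 where \<phi>1: "\<phi>1 \<in> v0_span \<alpha>" "\<forall>t. \<phi>1 t = (0, sin (of_int (1 + int k) / 2 * t))"
    using half_sine_in_v0_span by blast
  obtain \<phi>2 where \<phi>2: "\<phi>2 \<in> v0_span \<alpha>" "\<forall>t. \<phi>2 t = (0, sin (of_int (1 - int k) / 2 * t))"
    using half_sine_in_v0_span by blast
  have "(c/2) *\<^sub>R (\<phi>1 t + \<phi>2 t) = (0, sin (t/2) * (c * cos (real k * (1/2) * t)))" for t
  proof -
    have "sin (of_int (1 + int k) / 2 * t) + sin (of_int (1 - int k) / 2 * t)
        = 2 * (sin (t/2) * cos (real k * (1/2) * t))"
    proof -
      have "of_int (1 + int k) / 2 * t = t/2 + real k * (1/2) * t"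
        "of_int (1 - int k) / 2 * t = t/2 - real k * (1/2) * t" by (simp_all add: field_simps)
      then show ?thesis by (simp only: sin_add sin_diff)
    qed
    then show ?thesis by (simp add: \<phi>1(2) \<phi>2(2))
  qed
  then show ?case by (intro bexI[OF _ lin_combs_scale[OF lin_combs_add[OF \<phi>1(1) \<phi>2(1)]]] allI)
next
  case (cos_polys_add f g)
  then obtain \<phi>1 \<phi>2 where \<phi>1: "\<phi>1 \<in> v0_span \<alpha>" "\<forall>t. \<phi>1 t = (0, sin (t/2) * f t)"
    and \<phi>2: "\<phi>2 \<in> v0_span \<alpha>" "\<forall>t. \<phi>2 t = (0, sin (t/2) * g t)" by blast
  then have "\<forall>t. \<phi>1 t + \<phi>2 t = (0, sin (t/2) * (f t + g t))" by (simp add: distrib_left)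
  then show ?case by (rule bexI[OF _ lin_combs_add[OF \<phi>1(1) \<phi>2(1)]])
qed

lemma continuous_on_v0: "continuous_on S (v0 \<alpha> i)"
  by (cases "snd i = 1"; cases "snd i = 2"; cases "snd i = 3")
    (simp_all add: v0_def Let_def continuous_intros)

lemma continuous_on_lin_combs:
  fixes e :: "'i \<Rightarrow> 'a::topological_space \<Rightarrow> 'b::real_normed_vector"
  assumes "\<And>i. i \<in> I \<Longrightarrow> continuous_on S (e i)" "\<phi> \<in> lin_combs I e"
  shows "continuous_on S \<phi>"
  using assms unfolding lin_combs_def by (auto intro!: continuous_intros)

lemma v0_span_approx_fst:
  assumes tan: "tan (2*\<alpha>) \<noteq> 0" and f: "square_integrable {0..2*pi} f" and e: "0 < e"
  shows "\<exists>\<phi>\<in>v0_span \<alpha>. integral {0..2*pi} (\<lambda>t. (f t - fst (\<phi> t))\<^sup>2) < e"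
proof -
  have "sin (2*pi*(\<alpha>/pi)) \<noteq> 0" using tan by (auto simp: tan_def)
  then obtain P R where P: "P \<in> cos_polys 1" and R: "R \<in> cos_polys 1"
    and err: "integral {0..2*pi} (\<lambda>t. (f t - (cos (\<alpha>/pi * t) * P t - sin (\<alpha>/pi * t) * (sin t * R t)))\<^sup>2) < e"
    using shifted_cos_polys_approx[OF _ f e] by blast
  obtain \<phi>P where \<phi>P: "\<phi>P \<in> v0_span \<alpha>" "\<forall>t. fst (\<phi>P t) = cos (\<alpha>/pi * t) * P t"
    using cos_polys_cos_shift_in_v0_span[OF tan P] by blast
  obtain \<phi>R where \<phi>R: "\<phi>R \<in> v0_span \<alpha>" "\<forall>t. fst (\<phi>R t) = sin (\<alpha>/pi * t) * (sin t * R t)"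
    using cos_polys_sin_shift_in_v0_span[OF tan R] by blast
  show ?thesis
    using err \<phi>P(2) \<phi>R(2) by (intro bexI[OF _ lin_combs_diff[OF \<phi>P(1) \<phi>R(1)]]) simp
qed

lemma v0_span_approx_snd:
  assumes r: "square_integrable {0..2*pi} r" and e: "0 < e"
  shows "\<exists>\<phi>\<in>v0_span \<alpha>. (\<forall>t. fst (\<phi> t) = 0) \<and> integral {0..2*pi} (\<lambda>t. (r t - snd (\<phi> t))\<^sup>2) < e"
proof -
  have two_pi: "pi / (1/2) = 2*pi" by simp
  have "sin (t/2) \<noteq> 0" if "0 < t" "t < pi / (1/2)" for t
    using sin_gt_zero[of "t/2"] that by simp
  moreover have "square_integrable {0..pi / (1/2)} r" unfolding two_pi by (rule r)
  ultimately have "\<exists>R\<in>cos_polys (1/2). integral {0..pi / (1/2)} (\<lambda>t. (r t - sin (t/2) * R t)\<^sup>2) < e"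
    using e by (intro cos_polys_weighted_approx) (auto intro!: continuous_intros)
  then obtain R where R: "R \<in> cos_polys (1/2)"
    and err: "integral {0..2*pi} (\<lambda>t. (r t - sin (t/2) * R t)\<^sup>2) < e"
    unfolding two_pi by blast
  obtain \<phi> where "\<phi> \<in> v0_span \<alpha>" "\<forall>t. \<phi> t = (0, sin (t/2) * R t)"
    using cos_polys_half_sine_in_v0_span[OF R] by blast
  then show ?thesis using err by (intro bexI[of _ \<phi>]) auto
qed

lemma v0_complete:
  assumes tan: "tan (2*\<alpha>) \<noteq> 0" and h: "inH h" and e: "0 < e"
  shows "\<exists>\<phi>\<in>v0_span \<alpha>. Hnorm2 (\<lambda>t. h t - \<phi> t) < e"
proof -
  define f1 where "f1 t = fst (h t)" for t
  define f2 where "f2 t = snd (h t)" for t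
  have S: "{0..2*pi} \<in> sets lebesgue" by simp
  have f1: "square_integrable {0..2*pi} f1" and f2: "square_integrable {0..2*pi} f2"
    using h by (simp_all add: inH_def f1_def[abs_def] f2_def[abs_def] sq_int_imp_square_integrable)
  obtain \<phi>1 where \<phi>1: "\<phi>1 \<in> v0_span \<alpha>" and err1: "integral {0..2*pi} (\<lambda>t. (f1 t - fst (\<phi>1 t))\<^sup>2) < e/2"
    using v0_span_approx_fst[OF tan f1, of "e/2"] e by auto
  have c1: "continuous_on {0..2*pi} \<phi>1" by (rule continuous_on_lin_combs[OF continuous_on_v0 \<phi>1])
  define r where "r t = f2 t - snd (\<phi>1 t)" for t
  have r: "square_integrable {0..2*pi} r"
    unfolding r_def by (intro square_integrable_diff[OF S f2] square_integrable_continuous continuous_intros c1)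
  obtain \<phi>2 where \<phi>2: "\<phi>2 \<in> v0_span \<alpha>" "\<forall>t. fst (\<phi>2 t) = 0"
    and err2: "integral {0..2*pi} (\<lambda>t. (r t - snd (\<phi>2 t))\<^sup>2) < e/2"
    using v0_span_approx_snd[OF r, of "e/2"] e by auto
  have c2: "continuous_on {0..2*pi} \<phi>2" by (rule continuous_on_lin_combs[OF continuous_on_v0 \<phi>2(1)])
  have diff: "h t - (\<phi>1 t + \<phi>2 t) = (f1 t - fst (\<phi>1 t), r t - snd (\<phi>2 t))" for t
    using \<phi>2(2) by (simp add: prod_eq_iff f1_def f2_def r_def)
  have "Hnorm2 (\<lambda>t. h t - (\<phi>1 t + \<phi>2 t))
      = integral {0..2*pi} (\<lambda>t. (f1 t - fst (\<phi>1 t))\<^sup>2) + integral {0..2*pi} (\<lambda>t. (r t - snd (\<phi>2 t))\<^sup>2)"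
    unfolding diff
    by (intro Hnorm2_eq_integrals square_integrable_diff[OF S] f1 r square_integrable_continuous
        continuous_intros c1 c2)
  then show ?thesis using err1 err2 lin_combs_add[OF \<phi>1 \<phi>2(1)] by (intro bexI) auto
qed

lemma v0_riesz_constants:
  assumes tan: "tan (2*\<alpha>) \<noteq> 0"
  shows "\<exists>A B. 0 < A \<and> 0 < B \<and> (\<forall>F c. finite F \<longrightarrow> F \<subseteq> {1..} \<times> {1..4} \<longrightarrow>
           A * (\<Sum>i\<in>F. (c i)\<^sup>2) \<le> Hnorm2 (\<lambda>t. \<Sum>i\<in>F. c i *\<^sub>R v0 \<alpha> i t) \<and>
           Hnorm2 (\<lambda>t. \<Sum>i\<in>F. c i *\<^sub>R v0 \<alpha> i t) \<le> B * (\<Sum>i\<in>F. (c i)\<^sup>2))"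
proof -
  define \<kappa> where "\<kappa> = (tan (2*\<alpha>) / 2)\<^sup>2 * (pi * (sin (2*\<alpha>))\<^sup>2 / 3)"
  define K where "K = 1/\<kappa> + (1 + 2*pi/\<kappa>) / (pi/2)"
  have "sin (2*\<alpha>) \<noteq> 0" using tan by (auto simp: tan_def)
  then have K: "0 < K" using tan by (simp add: K_def \<kappa>_def add_pos_pos)
  have "1/K * (\<Sum>i\<in>F. (c i)\<^sup>2) \<le> Hnorm2 (\<lambda>t. \<Sum>i\<in>F. c i *\<^sub>R v0 \<alpha> i t)"
    if "finite F" "F \<subseteq> {1..} \<times> {1..4}" for F and c :: "nat \<times> nat \<Rightarrow> real"
    using v0_riesz_bounds(1)[OF tan that, of c] K by (simp add: K_def \<kappa>_def field_simps)
  then show ?thesis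
    using v0_riesz_bounds(2)[OF tan] K
    by (intro exI[of _ "1/K"] exI[of _ "2*pi * (tan (2*\<alpha>) / 2)\<^sup>2 + 4*pi"] conjI allI impI)
      (auto intro: add_nonneg_pos)
qed

theorem lemma6:
  fixes \<alpha> :: real
  assumes "0 < \<alpha>" and "\<alpha> < pi/2" and "\<alpha> \<noteq> pi/4"
  shows "riesz_basis_H ({1..} \<times> {1..4}) (v0 \<alpha>)"
proof -
  have tan: "tan (2*\<alpha>) \<noteq> 0" using tan_double_nonzero[OF assms] .
  show ?thesis
    unfolding riesz_basis_H_def
  proof (intro conjI ballI allI impI)
    show "inH (v0 \<alpha> i)" for i
      unfolding inH_def by (intro conjI continuous_imp_sq_int continuous_intros continuous_on_v0)
    show "\<exists>F c. finite F \<and> F \<subseteq> {1..} \<times> {1..4} \<and> Hnorm2 (\<lambda>t. h t - (\<Sum>i\<in>F. c i *\<^sub>R v0 \<alpha> i t)) < \<epsilon>"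
      if "inH h" "0 < \<epsilon>" for h \<epsilon>
      using v0_complete[OF tan that] unfolding lin_combs_def by blast
  qed (rule v0_riesz_constants[OF tan])
qed

end
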